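(* Let $r\ge2$ and let $F$ be an $r$-critical graph with $f$ vertices. There exists a constant $\zeta_F$ such that the following holds for all $\delta>0$ and all $n>n_0(\delta,F)$. Let $(n'_1,\dots,n'_r)$ be nonnegative integers with $\sum_i n'_i=n$, $|n'_i-n'_j|\le1$ for all $i,j$, and $c(n'_1,\dots,n'_r;F)=c(n,F)$. Let $n_1+\dots+n_r=n$ be nonnegative integers, $a_i=n_i-n'_i$ and $M=\max\{|a_i|: i\in[r]\}$. If $M<\delta n$, then \[ c(n,F)-c(n_1,\dots,n_r;F)=\zeta_F a_1 n^{f-3}+O(M^2n^{f-4}),\] where the implied constant depends only on $F$.
   Context: A graph $F$ is $r$-critical if $\chi(F)=r+1$ and $F$ contains an edge $e$ with $\chi(F-e)=r$. For disjoint sets $V_1,\dots,V_r$ with $|V_i|=n_i$, $K(V_1,\dots,V_r)$ denotes the complete $r$-partite graph with these parts, and $c(n_1,\dots,n_r;F)$ is the number of subgraphs isomorphic to $F$ in the graph obtained from $K(V_1,\dots,V_r)$ by adding one edge inside $V_1$. $c(n,F)$ is the minimum number of subgraphs isomorphic to $F$ in a graph obtained from the Turán graph $T_r(n)$ (complete $r$-partite graph on $n$ vertices with parts of sizes $\lfloor n/r\rfloor$ or $\lceil n/r\rceil$) by adding one edge. *)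

theory Defs
  imports Complex_Main
begin

definition is_graph :: "'v set \<Rightarrow> 'v set set \<Rightarrow> bool" where
  "is_graph V E \<longleftrightarrow> finite V \<and> (\<forall>e\<in>E. \<exists>u v. u \<in> V \<and> v \<in> V \<and> u \<noteq> v \<and> e = {u, v})"

definition colorable :: "'v set \<Rightarrow> 'v set set \<Rightarrow> nat \<Rightarrow> bool" where
  "colorable V E k \<longleftrightarrow> (\<exists>c :: 'v \<Rightarrow> nat. (\<forall>v\<in>V. c v < k) \<and>
      (\<forall>u v. {u, v} \<in> E \<and> u \<noteq> v \<longrightarrow> c u \<noteq> c v))"

definition chromatic_number :: "'v set \<Rightarrow> 'v set set \<Rightarrow> nat" where
  "chromatic_number V E = (LEAST k. colorable V E k)"

definition r_critical :: "nat \<Rightarrow> 'v set \<Rightarrow> 'v set set \<Rightarrow> bool" where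
  "r_critical r V E \<longleftrightarrow> chromatic_number V E = r + 1 \<and>
      (\<exists>e\<in>E. chromatic_number V (E - {e}) = r)"

definition sub_count :: "'v set \<Rightarrow> 'v set set \<Rightarrow> 'f set \<Rightarrow> 'f set set \<Rightarrow> nat" where
  "sub_count V E VF EF = card {(W, E'). W \<subseteq> V \<and> E' \<subseteq> E \<and>
      (\<exists>\<phi>. bij_betw \<phi> VF W \<and> E' = (\<lambda>e. \<phi> ` e) ` EF)}"

text \<open>Complete r-partite graph K(V_1,...,V_r) with |V_i| = ns (i-1) (parts indexed 0..r-1,
  part V_1 has index 0), plus one edge inside V_1.\<close>
definition part_vertices :: "nat \<Rightarrow> (nat \<Rightarrow> nat) \<Rightarrow> (nat \<times> nat) set" where
  "part_vertices r ns = {(i, j). i < r \<and> j < ns i}"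

definition part_edges_plus :: "nat \<Rightarrow> (nat \<Rightarrow> nat) \<Rightarrow> (nat \<times> nat) set set" where
  "part_edges_plus r ns =
     {{x, y} | x y. x \<in> part_vertices r ns \<and> y \<in> part_vertices r ns \<and> fst x \<noteq> fst y}
     \<union> (if ns 0 \<ge> 2 then {{(0, 0), (0, 1)}} else {})"

definition c_part :: "nat \<Rightarrow> (nat \<Rightarrow> nat) \<Rightarrow> 'f set \<Rightarrow> 'f set set \<Rightarrow> nat" where
  "c_part r ns VF EF = sub_count (part_vertices r ns) (part_edges_plus r ns) VF EF"

text \<open>Turan graph T_r(n) on {0..<n}: parts are residue classes mod r (sizes floor/ceil of n/r).\<close>
definition turan_edges :: "nat \<Rightarrow> nat \<Rightarrow> nat set set" where
  "turan_edges r n = {{u, v} | u v. u < n \<and> v < n \<and> u mod r \<noteq> v mod r}"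

definition c_turan :: "nat \<Rightarrow> nat \<Rightarrow> 'f set \<Rightarrow> 'f set set \<Rightarrow> nat" where
  "c_turan r n VF EF = Min {sub_count {..<n} (insert {u, v} (turan_edges r n)) VF EF | u v.
       u < n \<and> v < n \<and> u \<noteq> v \<and> {u, v} \<notin> turan_edges r n}"

end

theory Submission
  imports Defs "HOL-Library.FuncSet" "HOL-Combinatorics.Transposition"
begin

text \<open>Copies of \<open>F\<close> in the complete \<open>r\<close>-partite graph with part sizes \<open>ns\<close> plus one edge \<open>e\<close>
  inside the first part (index 0 below) are counted through labelled embeddings, of which there are
  \<open>|Aut F|\<close> per copy. The part assignment of an embedding is a colouring of \<open>F\<close> whose only
  monochromatic edge lies in part 0 and is mapped onto \<open>e\<close>; for a fixed such colouring the
  embeddings number twice a product of falling factorials of the part sizes, one factor for every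
  vertex of \<open>F\<close> off that edge. So the count is a polynomial of degree \<open>f - 2\<close> in the part sizes.
  Expanding it around the balanced sizes \<open>n' \<approx> n/r\<close>, the linear term is
  \<open>\<Sum>\<^sub>i \<Lambda>\<^sub>i a\<^sub>i (n/r)\<^sup>f\<^sup>-\<^sup>3\<close>, where \<open>\<Lambda>\<^sub>i\<close> counts the free vertices of colour \<open>i\<close> over all
  such colourings, and the remainder is \<open>O(M\<^sup>2 n\<^sup>f\<^sup>-\<^sup>4)\<close>. Swapping two colours other than 0 shows
  that \<open>\<Lambda>\<^sub>i\<close> is the same for all \<open>i \<noteq> 0\<close>, and \<open>\<Sum>\<^sub>i a\<^sub>i = 0\<close> collapses the linear term to
  \<open>(\<Lambda>\<^sub>0 - \<Lambda>\<^sub>1) a\<^sub>0 (n/r)\<^sup>f\<^sup>-\<^sup>3\<close>. If part 0 has fewer than two vertices there is no copy at all,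
  but then \<open>M \<ge> n/(2r)\<close> and every term is already \<open>O(M\<^sup>2 n\<^sup>f\<^sup>-\<^sup>4)\<close>.\<close>

section \<open>Elementary estimates\<close>

lemma abs_prod_add_minus_power_le:
  fixes u G H :: real and \<gamma> :: "'a \<Rightarrow> real"
  assumes "finite I" "u > 0" "H \<ge> 1" "G \<ge> 0"
    and "\<forall>i\<in>I. \<bar>\<gamma> i\<bar> \<le> G \<and> \<bar>u + \<gamma> i\<bar> \<le> H * u"
  shows "\<bar>(\<Prod>i\<in>I. u + \<gamma> i) - u ^ card I\<bar> * u \<le> card I * G * H ^ card I * u ^ card I"
  using assms(1,5)
proof (induction I rule: finite_induct)
  case empty
  then show ?case by simp
next
  case (insert x F)
  let ?P = "\<Prod>i\<in>F. u + \<gamma> i" and ?n = "card F"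
  have IH: "\<bar>?P - u ^ ?n\<bar> * u \<le> ?n * G * H ^ ?n * u ^ ?n"
    and \<gamma>x: "\<bar>\<gamma> x\<bar> \<le> G" "\<bar>u + \<gamma> x\<bar> \<le> H * u" using insert by auto
  have "(\<Prod>i\<in>insert x F. u + \<gamma> i) - u ^ card (insert x F) = (u + \<gamma> x) * (?P - u ^ ?n) + \<gamma> x * u ^ ?n"
    using insert by (simp add: algebra_simps)
  then have "\<bar>(\<Prod>i\<in>insert x F. u + \<gamma> i) - u ^ card (insert x F)\<bar> * u
      \<le> (\<bar>u + \<gamma> x\<bar> * \<bar>?P - u ^ ?n\<bar> + \<bar>\<gamma> x\<bar> * u ^ ?n) * u"
    using \<open>u > 0\<close> abs_triangle_ineq[of "(u + \<gamma> x) * (?P - u ^ ?n)" "\<gamma> x * u ^ ?n"]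
    by (intro mult_right_mono) (auto simp: abs_mult)
  also have "\<dots> = \<bar>u + \<gamma> x\<bar> * (\<bar>?P - u ^ ?n\<bar> * u) + \<bar>\<gamma> x\<bar> * u ^ Suc ?n"
    by (simp add: algebra_simps)
  also have "\<dots> \<le> (H * u) * (?n * G * H ^ ?n * u ^ ?n) + G * (H ^ Suc ?n * u ^ Suc ?n)"
  proof (rule add_mono)
    show "\<bar>u + \<gamma> x\<bar> * (\<bar>?P - u ^ ?n\<bar> * u) \<le> (H * u) * (?n * G * H ^ ?n * u ^ ?n)"
      using \<open>u > 0\<close> \<open>H \<ge> 1\<close> by (intro mult_mono[OF \<gamma>x(2) IH]) auto
    have "u ^ Suc ?n \<le> H ^ Suc ?n * u ^ Suc ?n"
      using \<open>u > 0\<close> one_le_power[OF \<open>H \<ge> 1\<close>, of "Suc ?n"] by simp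
    then show "\<bar>\<gamma> x\<bar> * u ^ Suc ?n \<le> G * (H ^ Suc ?n * u ^ Suc ?n)"
      using \<gamma>x \<open>G \<ge> 0\<close> \<open>u > 0\<close> by (intro mult_mono) auto
  qed
  also have "\<dots> = card (insert x F) * G * H ^ card (insert x F) * u ^ card (insert x F)"
    using insert by (simp add: algebra_simps)
  finally show ?case .
qed

lemma linearization_coefficient_step:
  fixes H B :: real
  assumes "H \<ge> 1 + B" "B \<ge> 0"
  shows "(1 + B) * (real n)\<^sup>2 * H ^ (2 * n) + B * n + n * (B + 1) * H ^ n
    \<le> (real (Suc n))\<^sup>2 * H ^ (2 * Suc n)"
proof -
  have H1: "H \<ge> 1" using assms by simp
  have pow: "H ^ k \<le> H ^ (2 * Suc n)" if "k \<le> 2 * Suc n" for k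
    by (rule power_increasing[OF that H1])
  have "(1 + B) * H ^ (2 * n) \<le> H ^ Suc (2 * n)" using assms H1 by (simp add: mult_right_mono)
  also have "\<dots> \<le> H ^ (2 * Suc n)" by (rule pow) simp
  finally have "(real n)\<^sup>2 * ((1 + B) * H ^ (2 * n)) \<le> (real n)\<^sup>2 * H ^ (2 * Suc n)"
    by (rule mult_left_mono) simp
  moreover have "B * n \<le> n * H ^ (2 * Suc n)"
  proof -
    have "H \<le> H ^ (2 * Suc n)" using pow[of 1] by simp
    then have "B \<le> H ^ (2 * Suc n)" using assms by linarith
    from mult_right_mono[OF this, of "real n"] show ?thesis by (simp add: mult.commute)
  qed
  moreover have "n * (B + 1) * H ^ n \<le> n * H ^ (2 * Suc n)"
  proof -
    have "(B + 1) * H ^ n \<le> H ^ Suc n" using assms H1 by (simp add: mult_right_mono)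
    also have "\<dots> \<le> H ^ (2 * Suc n)" by (rule pow) simp
    finally show ?thesis by (simp add: mult.assoc mult_left_mono)
  qed
  ultimately have "(1 + B) * (real n)\<^sup>2 * H ^ (2 * n) + B * n + n * (B + 1) * H ^ n
      \<le> ((real n)\<^sup>2 + 2 * n) * H ^ (2 * Suc n)" by (simp add: algebra_simps)
  also have "\<dots> \<le> (real (Suc n))\<^sup>2 * H ^ (2 * Suc n)"
    using H1 by (intro mult_right_mono) (auto simp: power2_eq_square algebra_simps)
  finally show ?thesis .
qed

lemma linearization_step_bound:
  fixes u M B H D S P \<alpha> \<beta> :: real
  assumes u: "u \<ge> 1" and M: "M \<ge> 1" and B: "B \<ge> 0" and H: "H \<ge> 1 + B"
    and \<beta>: "\<bar>\<beta>\<bar> \<le> B" and \<alpha>: "\<bar>\<alpha>\<bar> \<le> M" and S: "\<bar>S\<bar> \<le> n * M"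
    and D: "\<bar>D\<bar> * u \<le> (real n)\<^sup>2 * H ^ (2 * n) * M\<^sup>2 * u ^ n"
    and P: "\<bar>P - u ^ n\<bar> * u \<le> n * (B + M) * H ^ n * u ^ n"
  shows "\<bar>(u + \<beta>) * D + \<beta> * u ^ n * S + u * \<alpha> * (P - u ^ n)\<bar> * u
    \<le> (real (Suc n))\<^sup>2 * H ^ (2 * Suc n) * (M\<^sup>2 * u ^ Suc n)"
proof -
  have M_sq: "M \<le> M\<^sup>2" using M by (simp add: power2_eq_square)
  have T1: "\<bar>(u + \<beta>) * D\<bar> * u \<le> (1 + B) * (real n)\<^sup>2 * H ^ (2 * n) * M\<^sup>2 * u ^ Suc n"
  proof -
    have "\<bar>u + \<beta>\<bar> \<le> (1 + B) * u" using \<beta> u B mult_le_cancel_left1[of B u] by (simp add: algebra_simps)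
    then have "\<bar>u + \<beta>\<bar> * (\<bar>D\<bar> * u) \<le> ((1 + B) * u) * ((real n)\<^sup>2 * H ^ (2 * n) * M\<^sup>2 * u ^ n)"
      using B u by (intro mult_mono D) auto
    then show ?thesis by (simp add: abs_mult mult_ac)
  qed
  have T2: "\<bar>\<beta> * u ^ n * S\<bar> * u \<le> B * n * M\<^sup>2 * u ^ Suc n"
  proof -
    have "\<bar>\<beta>\<bar> * \<bar>S\<bar> \<le> B * (n * M\<^sup>2)"
    proof (rule mult_mono)
      show "\<bar>S\<bar> \<le> n * M\<^sup>2" using S mult_left_mono[OF M_sq, of "real n"] by simp
    qed (use \<beta> B in auto)
    from mult_right_mono[OF this, of "u ^ Suc n"] show ?thesis using u by (simp add: abs_mult mult_ac)
  qed
  have T3: "\<bar>u * \<alpha> * (P - u ^ n)\<bar> * u \<le> n * (B + 1) * H ^ n * M\<^sup>2 * u ^ Suc n"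
  proof -
    have "\<bar>\<alpha>\<bar> * (\<bar>P - u ^ n\<bar> * u) \<le> M * (n * (B + M) * H ^ n * u ^ n)"
      using M u by (intro mult_mono[OF \<alpha> P]) auto
    also have "\<dots> = (M * (B + M)) * (n * H ^ n * u ^ n)" by (simp add: mult_ac)
    also have "\<dots> \<le> ((B + 1) * M\<^sup>2) * (n * H ^ n * u ^ n)"
      using mult_left_mono[OF M_sq B] H B u
      by (intro mult_right_mono) (auto simp: power2_eq_square algebra_simps)
    finally have "\<bar>\<alpha>\<bar> * (\<bar>P - u ^ n\<bar> * u) \<le> ((B + 1) * M\<^sup>2) * (n * H ^ n * u ^ n)" .
    from mult_left_mono[OF this, of u] show ?thesis using u by (simp add: abs_mult mult_ac)
  qed
  have "\<bar>(u + \<beta>) * D + \<beta> * u ^ n * S + u * \<alpha> * (P - u ^ n)\<bar> * u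
      \<le> (\<bar>(u + \<beta>) * D\<bar> + \<bar>\<beta> * u ^ n * S\<bar> + \<bar>u * \<alpha> * (P - u ^ n)\<bar>) * u"
    using u by (intro mult_right_mono) linarith+
  also have "\<dots> \<le> ((1 + B) * (real n)\<^sup>2 * H ^ (2 * n) + B * n + n * (B + 1) * H ^ n) * (M\<^sup>2 * u ^ Suc n)"
    using T1 T2 T3 by (simp add: algebra_simps)
  also have "\<dots> \<le> (real (Suc n))\<^sup>2 * H ^ (2 * Suc n) * (M\<^sup>2 * u ^ Suc n)"
    using linearization_coefficient_step[OF H B] u by (intro mult_right_mono) auto
  finally show ?thesis .
qed

text \<open>The error term is of order \<open>M\<^sup>2 u\<^sup>n\<^sup>-\<^sup>2\<close>; the statement is multiplied through by
  \<open>u\<^sup>2\<close> to avoid negative exponents.\<close>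
lemma prod_linearization_bound:
  fixes u M B K :: real and \<alpha> \<beta> :: "'a \<Rightarrow> real"
  assumes "finite I" and u: "u \<ge> 1" and M: "M \<ge> 1" "M \<le> K * u" and B: "B \<ge> 0"
    and "\<forall>i\<in>I. \<bar>\<beta> i\<bar> \<le> B \<and> \<bar>\<alpha> i\<bar> \<le> M"
  shows "\<bar>u * ((\<Prod>i\<in>I. u + \<beta> i + \<alpha> i) - (\<Prod>i\<in>I. u + \<beta> i)) - u ^ card I * (\<Sum>i\<in>I. \<alpha> i)\<bar> * u
      \<le> (real (card I))\<^sup>2 * (1 + B + K) ^ (2 * card I) * M\<^sup>2 * u ^ card I"
  using assms(1,6)
proof (induction I rule: finite_induct)
  case empty
  then show ?case by simp
next
  case (insert x F)
  define H where "H = 1 + B + K"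
  define n where "n = card F"
  define P' where "P' = (\<Prod>i\<in>F. u + \<beta> i + \<alpha> i)"
  define P where "P = (\<Prod>i\<in>F. u + \<beta> i)"
  define S where "S = (\<Sum>i\<in>F. \<alpha> i)"
  have "0 < K * u" using M by linarith
  then have K: "K \<ge> 0" using u by (simp add: zero_less_mult_iff)
  have "\<bar>S\<bar> \<le> (\<Sum>i\<in>F. \<bar>\<alpha> i\<bar>)" unfolding S_def by (rule sum_abs)
  also have "\<dots> \<le> (\<Sum>i\<in>F. M)" using insert by (intro sum_mono) auto
  finally have S_le: "\<bar>S\<bar> \<le> n * M" by (simp add: n_def)
  have P'_near: "\<bar>P' - u ^ n\<bar> * u \<le> n * (B + M) * H ^ n * u ^ n"
    unfolding P'_def n_def add.assoc
  proof (rule abs_prod_add_minus_power_le)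
    show "\<forall>i\<in>F. \<bar>\<beta> i + \<alpha> i\<bar> \<le> B + M \<and> \<bar>u + (\<beta> i + \<alpha> i)\<bar> \<le> H * u"
    proof
      fix i assume "i \<in> F"
      then have "\<bar>\<beta> i\<bar> \<le> B" "\<bar>\<alpha> i\<bar> \<le> M" using insert by auto
      moreover have "\<bar>u + (\<beta> i + \<alpha> i)\<bar> \<le> u + \<bar>\<beta> i\<bar> + \<bar>\<alpha> i\<bar>" using u by linarith
      moreover have "B \<le> B * u" using B u by (simp add: mult_le_cancel_left1)
      ultimately show "\<bar>\<beta> i + \<alpha> i\<bar> \<le> B + M \<and> \<bar>u + (\<beta> i + \<alpha> i)\<bar> \<le> H * u"
        using M unfolding H_def by (simp add: algebra_simps)
    qed
  qed (use insert u B M K in \<open>auto simp: H_def\<close>)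
  have "u * ((\<Prod>i\<in>insert x F. u + \<beta> i + \<alpha> i) - (\<Prod>i\<in>insert x F. u + \<beta> i))
      - u ^ card (insert x F) * (\<Sum>i\<in>insert x F. \<alpha> i)
      = (u + \<beta> x) * (u * (P' - P) - u ^ n * S) + \<beta> x * u ^ n * S + u * \<alpha> x * (P' - u ^ n)"
    using insert unfolding P'_def P_def S_def n_def by (simp add: algebra_simps)
  moreover have "\<bar>(u + \<beta> x) * (u * (P' - P) - u ^ n * S) + \<beta> x * u ^ n * S + u * \<alpha> x * (P' - u ^ n)\<bar> * u
      \<le> (real (Suc n))\<^sup>2 * H ^ (2 * Suc n) * (M\<^sup>2 * u ^ Suc n)"
  proof (rule linearization_step_bound[OF u M(1) B _ _ _ S_le _ P'_near])
    show "\<bar>u * (P' - P) - u ^ n * S\<bar> * u \<le> (real n)\<^sup>2 * H ^ (2 * n) * M\<^sup>2 * u ^ n"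
      using insert unfolding P'_def P_def S_def n_def H_def by auto
  qed (use insert K in \<open>auto simp: H_def\<close>)
  ultimately show ?case using insert by (simp add: n_def H_def mult.assoc)
qed

lemma rescaled_linearization_bound:
  fixes X Y W u r K M :: real and d :: nat
  assumes d: "d \<ge> 1" and u: "u > 0" and r: "r \<ge> 1" and K: "K \<ge> 0"
    and bound: "\<bar>u * (Y - X) - W * u ^ d\<bar> * u \<le> K * M\<^sup>2 * u ^ d"
  shows "\<bar>X - Y + W * u ^ (d - 1)\<bar> \<le> K * r\<^sup>2 * M\<^sup>2 * ((r * u) ^ d / (r * u)\<^sup>2)"
proof -
  have "u * (Y - X) - W * u ^ d = - u * (X - Y + W * u ^ (d - 1))"
    using d by (cases d) (simp_all add: algebra_simps)
  then have "\<bar>X - Y + W * u ^ (d - 1)\<bar> * u\<^sup>2 \<le> K * M\<^sup>2 * u ^ d"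
    using bound u by (simp add: abs_mult power2_eq_square mult_ac)
  then have "\<bar>X - Y + W * u ^ (d - 1)\<bar> \<le> K * M\<^sup>2 * (u ^ d / u\<^sup>2)"
    using u by (simp add: field_simps)
  also have "\<dots> \<le> K * M\<^sup>2 * (r\<^sup>2 * ((r * u) ^ d / (r * u)\<^sup>2))"
  proof -
    have "u ^ d / u\<^sup>2 = r\<^sup>2 * ((r * u) ^ d / (r * u)\<^sup>2) / r ^ d"
      using u r by (simp add: power_mult_distrib field_simps)
    also have "\<dots> \<le> r\<^sup>2 * ((r * u) ^ d / (r * u)\<^sup>2)" (is "?Z / _ \<le> ?Z")
    proof -
      have "0 \<le> ?Z" using u r by simp
      moreover have "1 \<le> r ^ d" using r by (simp add: one_le_power)
      ultimately have "?Z \<le> ?Z * r ^ d" using mult_left_mono by fastforce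
      then show ?thesis using r by (intro mult_imp_div_pos_le) auto
    qed
    finally show ?thesis using K by (intro mult_left_mono) auto
  qed
  finally show ?thesis by (simp add: mult_ac)
qed

lemma degenerate_error_bound:
  fixes X \<zeta> a n r M Kx :: real and d :: nat
  assumes d: "d \<ge> 1" and X: "0 \<le> X" "X \<le> Kx * n ^ d" and n: "n > 0" "n \<le> 2 * r * M"
    and a: "\<bar>a\<bar> \<le> M" and aut: "aut \<ge> 1"
  shows "\<bar>X / aut - \<zeta> * a * n ^ (d - 1)\<bar> \<le> (4 * Kx * r\<^sup>2 / aut + 2 * r * \<bar>\<zeta>\<bar>) * M\<^sup>2 * (n ^ d / n\<^sup>2)"
proof -
  define Q where "Q = n ^ d / n\<^sup>2"
  obtain k where k: "d = Suc k" using d by (cases d) auto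
  have Q: "Q \<ge> 0" "n ^ d = n\<^sup>2 * Q" "n ^ (d - 1) = n * Q"
    using n unfolding Q_def k by (simp_all add: power2_eq_square)
  have M: "0 \<le> M" using a by linarith
  have "X / aut \<le> 4 * Kx * r\<^sup>2 / aut * M\<^sup>2 * Q"
  proof -
    have "0 \<le> Kx * n ^ d" "0 < n ^ d" using X n by auto
    then have "Kx \<ge> 0" by (simp add: zero_le_mult_iff)
    moreover have "n\<^sup>2 \<le> (2 * r * M)\<^sup>2" using n by (intro power_mono) auto
    ultimately have "Kx * n\<^sup>2 * Q \<le> Kx * (2 * r * M)\<^sup>2 * Q"
      using Q(1) by (intro mult_right_mono mult_left_mono) auto
    then have "X \<le> Kx * (2 * r * M)\<^sup>2 * Q" using X(2) Q(2) by (simp add: mult.assoc)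
    then show ?thesis using aut by (simp add: field_simps power_mult_distrib)
  qed
  moreover have "\<bar>\<zeta> * a * n ^ (d - 1)\<bar> \<le> 2 * r * \<bar>\<zeta>\<bar> * M\<^sup>2 * Q"
  proof -
    have "\<bar>a\<bar> * n \<le> M * (2 * r * M)" using a n M by (intro mult_mono) auto
    then have "\<bar>\<zeta>\<bar> * (\<bar>a\<bar> * n) * Q \<le> \<bar>\<zeta>\<bar> * (M * (2 * r * M)) * Q"
      using Q by (intro mult_right_mono mult_left_mono) auto
    then show ?thesis using Q n by (simp add: abs_mult power2_eq_square mult_ac)
  qed
  moreover have "X / aut \<ge> 0" using X aut by simp
  ultimately show ?thesis unfolding Q_def[symmetric] by (simp add: algebra_simps abs_le_iff)
qed

lemma of_nat_prod_lessThan_diff: "real (\<Prod>j<k. m - j) = (\<Prod>j<k. real m - real j)"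
proof (cases "k \<le> m")
  case True
  then show ?thesis by (simp add: of_nat_prod of_nat_diff)
next
  case False
  then have m: "m \<in> {..<k}" by simp
  have "(\<Prod>j<k. real m - real j) = 0" by (rule prod_zero) (use m in auto)
  moreover have "(\<Prod>j<k. m - j) = 0" by (rule prod_zero) (use m in auto)
  ultimately show ?thesis by (simp only: of_nat_0)
qed

lemma powi_int_minus:
  fixes x :: real
  assumes "x > 0" "k \<ge> 3"
  shows "x powi (int k - 3) = x ^ (k - 3)" and "x powi (int k - 4) = x ^ (k - 2) / x\<^sup>2"
proof -
  have "int k - 3 = int (k - 3)" using assms(2) by simp
  then show "x powi (int k - 3) = x ^ (k - 3)" by (simp only: power_int_of_nat)
  have exponent: "int k - 4 = int (k - 2) - int 2" using assms(2) by simp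
  have "x powi (int (k - 2) - int 2) = x powi int (k - 2) / x powi int 2"
    by (rule power_int_diff) (use assms(1) in simp)
  then show "x powi (int k - 4) = x ^ (k - 2) / x\<^sup>2" by (simp only: exponent power_int_of_nat)
qed

lemma balanced_near_average:
  assumes r: "r > 0" and sum: "(\<Sum>i<r. n' i) = n"
    and balanced: "\<forall>i<r. \<forall>j<r. \<bar>int (n' i) - int (n' j)\<bar> \<le> 1" and i: "i < r"
  shows "\<bar>real (n' i) - real n / real r\<bar> \<le> 1"
proof -
  have near: "real (n' j) \<le> real (n' i) + 1 \<and> real (n' i) \<le> real (n' j) + 1" if "j < r" for j
    using balanced i that by fastforce
  have sum_real: "real n = (\<Sum>j<r. real (n' j))" using sum by (metis of_nat_sum)
  have "real n \<le> real r * (real (n' i) + 1)"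
    using sum_mono[of "{..<r}" "\<lambda>j. real (n' j)" "\<lambda>_. real (n' i) + 1"] near unfolding sum_real by simp
  moreover have "real r * (real (n' i) - 1) \<le> real n"
    using sum_mono[of "{..<r}" "\<lambda>_. real (n' i) - 1" "\<lambda>j. real (n' j)"] near unfolding sum_real by force
  ultimately show ?thesis using r by (auto simp: abs_le_iff field_simps)
qed

lemma Max_deviation_bounds:
  fixes r n :: nat and ns n' :: "nat \<Rightarrow> nat"
  assumes r: "r > 0" and sums: "(\<Sum>i<r. ns i) = n" "(\<Sum>i<r. n' i) = n"
  defines "M \<equiv> Max {nat \<bar>int (ns i) - int (n' i)\<bar> | i. i < r}"
  shows "\<forall>i<r. \<bar>real (ns i) - real (n' i)\<bar> \<le> real M" and "M \<le> n"
proof -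
  have set: "{nat \<bar>int (ns i) - int (n' i)\<bar> | i. i < r} = (\<lambda>i. nat \<bar>int (ns i) - int (n' i)\<bar>) ` {..<r}"
    by auto
  have "nat \<bar>int (ns i) - int (n' i)\<bar> \<le> M" if "i < r" for i
    unfolding M_def set using that by (intro Max_ge finite_imageI) auto
  then show "\<forall>i<r. \<bar>real (ns i) - real (n' i)\<bar> \<le> real M" by fastforce
  have le_n: "ns i \<le> n" "n' i \<le> n" if "i < r" for i
    using sums that by (metis finite_lessThan lessThan_iff member_le_sum zero_le)+
  have "M \<in> (\<lambda>i. nat \<bar>int (ns i) - int (n' i)\<bar>) ` {..<r}"
    unfolding M_def set using r by (intro Max_in) auto
  then show "M \<le> n" using le_n by fastforce
qed

section \<open>Counting injections\<close>

lemma inj_on_fun_upd_pair: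
  assumes g: "inj_on g (X - {x, y})" and "x \<noteq> y" "c \<noteq> c'"
    and avoid: "c \<notin> g ` (X - {x, y})" "c' \<notin> g ` (X - {x, y})"
  shows "inj_on (g(x := c, y := c')) X"
proof -
  let ?A = "X - {x, y}" and ?f = "g(x := c, y := c')"
  have "?f ` ?A = g ` ?A" by auto
  moreover have "inj_on ?f ?A" using g by (rule inj_on_cong[THEN iffD2, rotated]) auto
  ultimately have "inj_on ?f (insert y ?A)" using avoid(2) by simp
  moreover have "?f ` (insert y ?A - {x}) = insert c' (g ` ?A)" using \<open>x \<noteq> y\<close> by auto
  ultimately have "inj_on ?f (insert x (insert y ?A))" using avoid(1) \<open>c \<noteq> c'\<close> \<open>x \<noteq> y\<close> by simp
  then show ?thesis by (rule inj_on_subset) auto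
qed

lemma fun_upd_pair_pinned:
  assumes xy: "x \<in> X" "y \<in> X" "x \<noteq> y" and ab: "{a, b} \<subseteq> S x" "{a, b} \<subseteq> S y"
    and c: "{a, b} = {c, c'}" "c \<noteq> c'" and g: "g \<in> extensional (X - {x, y})" "inj_on g (X - {x, y})"
    "\<And>v. v \<in> X - {x, y} \<Longrightarrow> g v \<in> S v - {a, b}"
  shows "g(x := c, y := c') \<in> {f \<in> extensional X. inj_on f X \<and> (\<forall>v\<in>X. f v \<in> S v) \<and> {f x, f y} = {a, b}}"
proof -
  let ?f = "g(x := c, y := c')"
  have "?f \<in> extensional X" using g(1) xy by (auto simp: extensional_def)
  moreover have "inj_on ?f X"
    using g(3) c by (intro inj_on_fun_upd_pair[OF g(2) xy(3)]) fastforce+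
  moreover have "?f v \<in> S v" if "v \<in> X" for v
    using that g(3) c ab by (cases "v \<in> {x, y}") auto
  moreover have "{?f x, ?f y} = {a, b}" using xy(3) c by auto
  ultimately show ?thesis by blast
qed

lemma card_inj_pinned_pair:
  assumes xy: "x \<in> X" "y \<in> X" "x \<noteq> y" and ab: "a \<noteq> b" "{a, b} \<subseteq> S x" "{a, b} \<subseteq> S y"
  shows "card {f \<in> extensional X. inj_on f X \<and> (\<forall>v\<in>X. f v \<in> S v) \<and> {f x, f y} = {a, b}}
    = 2 * card {g \<in> extensional (X - {x, y}). inj_on g (X - {x, y}) \<and> (\<forall>v\<in>X - {x, y}. g v \<in> S v - {a, b})}"
    (is "card ?F = 2 * card ?G")
proof -
  define other where "other c = (if c = a then b else a)" for c
  define split where "split f = (f x, restrict f (X - {x, y}))" for f :: "'a \<Rightarrow> 'b"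
  define join where "join = (\<lambda>(c, g). g(x := c, y := other c))"
  have other: "other c \<noteq> c" "{c, other c} = {a, b}" if "c \<in> {a, b}" for c
    using that ab(1) by (auto simp: other_def)
  have "bij_betw split ?F ({a, b} \<times> ?G)"
  proof (rule bij_betwI[where g = join])
    show "split \<in> ?F \<rightarrow> {a, b} \<times> ?G"
    proof
      fix f assume f: "f \<in> ?F"
      have inj: "inj_on f X" and pinned: "{f x, f y} = {a, b}" using f by auto
      have "f v \<notin> {a, b}" if "v \<in> X - {x, y}" for v
        unfolding pinned[symmetric] using that xy inj_onD[OF inj] by blast
      moreover have "f x \<in> {a, b}" using pinned by blast
      ultimately show "split f \<in> {a, b} \<times> ?G"
        using f by (auto simp: split_def inj_on_def)
    qed
    show "join \<in> {a, b} \<times> ?G \<rightarrow> ?F"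
    proof
      fix q assume "q \<in> {a, b} \<times> ?G"
      then obtain c g where q: "q = (c, g)" and c: "c \<in> {a, b}" and g: "g \<in> ?G" by blast
      have "g(x := c, y := other c) \<in> ?F"
        by (rule fun_upd_pair_pinned[OF xy ab(2,3) other(2,1)[OF c, symmetric]]) (use g in auto)
      then show "join q \<in> ?F" unfolding q join_def by simp
    qed
    show "join (split f) = f" if "f \<in> ?F" for f
    proof -
      have "f y = other (f x)"
        using that xy ab(1) by (auto simp: other_def doubleton_eq_iff inj_on_def)
      then show ?thesis using that by (auto simp: join_def split_def fun_eq_iff extensional_def)
    qed
    show "split (join q) = q" if "q \<in> {a, b} \<times> ?G" for q
      using that xy by (auto simp: join_def split_def fun_eq_iff extensional_def)
  qed
  then have "card ?F = card ({a, b} \<times> ?G)" by (rule bij_betw_same_card)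
  then show ?thesis using ab(1) by (simp add: card_cartesian_product)
qed

lemma card_typed_injections:
  fixes \<pi> :: "'a \<Rightarrow> 'i"
  assumes "finite I" "\<pi> ` A \<subseteq> I"
  shows "card {g \<in> extensional A. inj_on g A \<and> (\<forall>v\<in>A. g v \<in> {\<pi> v} \<times> T (\<pi> v))}
    = (\<Prod>i\<in>I. card {h \<in> {v\<in>A. \<pi> v = i} \<rightarrow>\<^sub>E T i. inj_on h {v\<in>A. \<pi> v = i}})"
    (is "card ?G = (\<Prod>i\<in>I. card (?H i))")
proof -
  define split where "split g = (\<lambda>i\<in>I. restrict (snd \<circ> g) {v\<in>A. \<pi> v = i})" for g :: "'a \<Rightarrow> 'i \<times> 'b"
  define join where "join H = restrict (\<lambda>v. (\<pi> v, H (\<pi> v) v)) A" for H :: "'i \<Rightarrow> 'a \<Rightarrow> 'b"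
  have "bij_betw split ?G (\<Pi>\<^sub>E i\<in>I. ?H i)"
  proof (rule bij_betwI[where g = join])
    show "split \<in> ?G \<rightarrow> (\<Pi>\<^sub>E i\<in>I. ?H i)"
    proof
      fix g assume "g \<in> ?G"
      then have inj: "inj_on g A" and typed: "\<And>v. v \<in> A \<Longrightarrow> g v = (\<pi> v, snd (g v)) \<and> snd (g v) \<in> T (\<pi> v)"
        by (auto simp: mem_Times_iff prod_eq_iff)
      have "inj_on (snd \<circ> g) {v\<in>A. \<pi> v = i}" for i
        by (rule inj_onI) (metis (mono_tags, lifting) comp_apply inj inj_onD mem_Collect_eq typed)
      then have "restrict (snd \<circ> g) {v\<in>A. \<pi> v = i} \<in> ?H i" for i
        using typed by (force simp: restrict_PiE_iff)
      then show "split g \<in> (\<Pi>\<^sub>E i\<in>I. ?H i)" unfolding split_def by (simp only: restrict_PiE_iff) blast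
    qed
    show "join \<in> (\<Pi>\<^sub>E i\<in>I. ?H i) \<rightarrow> ?G"
    proof
      fix H assume H: "H \<in> (\<Pi>\<^sub>E i\<in>I. ?H i)"
      then have H_val: "H (\<pi> v) v \<in> T (\<pi> v)" and H_inj: "inj_on (H (\<pi> v)) {w\<in>A. \<pi> w = \<pi> v}"
        if "v \<in> A" for v using that assms(2) by (auto simp: PiE_iff)
      have "inj_on (join H) A"
      proof (rule inj_onI)
        fix v w assume "v \<in> A" "w \<in> A" "join H v = join H w"
        then show "v = w" using inj_onD[OF H_inj[of w], of v w] by (auto simp: join_def)
      qed
      then show "join H \<in> ?G" using H_val by (auto simp: join_def)
    qed
    show "join (split g) = g" if "g \<in> ?G" for g
      using that assms(2) by (auto simp: join_def split_def fun_eq_iff extensional_def mem_Times_iff prod_eq_iff)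
    show "split (join H) = H" if "H \<in> (\<Pi>\<^sub>E i\<in>I. ?H i)" for H
      using that by (auto simp: join_def split_def fun_eq_iff extensional_def PiE_iff)
  qed
  then have "card ?G = card (\<Pi>\<^sub>E i\<in>I. ?H i)" by (rule bij_betw_same_card)
  then show ?thesis using assms(1) by (simp add: card_PiE)
qed

lemma card_injections:
  assumes "finite A" "finite B"
  shows "card {h \<in> A \<rightarrow>\<^sub>E B. inj_on h A} = (\<Prod>j<card A. card B - j)"
  using card_inj_on_subset_funcset[OF assms subset_refl] by (simp add: atLeast0LessThan)

section \<open>Copies, embeddings and automorphisms\<close>

definition embeddings :: "'v set \<Rightarrow> 'v set set \<Rightarrow> 'f set \<Rightarrow> 'f set set \<Rightarrow> ('f \<Rightarrow> 'v) set" where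
  "embeddings V E VF EF = {\<phi> \<in> VF \<rightarrow>\<^sub>E V. inj_on \<phi> VF \<and> (\<forall>e\<in>EF. \<phi> ` e \<in> E)}"

definition automorphisms :: "'f set \<Rightarrow> 'f set set \<Rightarrow> ('f \<Rightarrow> 'f) set" where
  "automorphisms VF EF = {\<sigma> \<in> VF \<rightarrow>\<^sub>E VF. bij_betw \<sigma> VF VF \<and> (\<lambda>e. \<sigma> ` e) ` EF = EF}"

definition copy_of :: "'f set \<Rightarrow> 'f set set \<Rightarrow> ('f \<Rightarrow> 'v) \<Rightarrow> 'v set \<times> 'v set set" where
  "copy_of VF EF \<phi> = (\<phi> ` VF, (\<lambda>e. \<phi> ` e) ` EF)"

lemma is_graph_finite: "is_graph VF EF \<Longrightarrow> finite VF"
  unfolding is_graph_def by simp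

lemma is_graph_edge_subset: "is_graph VF EF \<Longrightarrow> e \<in> EF \<Longrightarrow> e \<subseteq> VF"
  unfolding is_graph_def by fastforce

lemma is_graph_edgeE:
  assumes "is_graph VF EF" "e \<in> EF"
  obtains u v where "u \<in> VF" "v \<in> VF" "u \<noteq> v" "e = {u, v}"
  using assms unfolding is_graph_def by blast

lemma finite_embeddings: "finite VF \<Longrightarrow> finite V \<Longrightarrow> finite (embeddings V E VF EF)"
  unfolding embeddings_def by (rule finite_subset[of _ "VF \<rightarrow>\<^sub>E V"]) (auto intro: finite_PiE)

lemma finite_automorphisms: "finite VF \<Longrightarrow> finite (automorphisms VF EF)"
  unfolding automorphisms_def by (rule finite_subset[of _ "VF \<rightarrow>\<^sub>E VF"]) (auto intro: finite_PiE)

lemma sub_count_eq_card_copies: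
  assumes G: "is_graph VF EF"
  shows "sub_count V E VF EF = card (copy_of VF EF ` embeddings V E VF EF)"
proof -
  have "{(W, E'). W \<subseteq> V \<and> E' \<subseteq> E \<and> (\<exists>\<phi>. bij_betw \<phi> VF W \<and> E' = (\<lambda>e. \<phi> ` e) ` EF)}
      = copy_of VF EF ` embeddings V E VF EF" (is "?copies = _")
  proof (intro equalityI subsetI)
    fix q assume "q \<in> ?copies"
    then obtain W E' \<phi> where q: "q = (W, E')" "W \<subseteq> V" "E' \<subseteq> E"
      and \<phi>: "bij_betw \<phi> VF W" "E' = (\<lambda>e. \<phi> ` e) ` EF" by blast
    have img: "restrict \<phi> VF ` e = \<phi> ` e" if "e \<in> EF" for e
      using is_graph_edge_subset[OF G that] by auto
    have "restrict \<phi> VF \<in> embeddings V E VF EF"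
      unfolding embeddings_def using q \<phi> img
      by (auto simp: bij_betw_def inj_on_def)
    moreover have "copy_of VF EF (restrict \<phi> VF) = q"
      unfolding copy_of_def using q \<phi> img by (auto simp: bij_betw_def image_iff)
    ultimately show "q \<in> copy_of VF EF ` embeddings V E VF EF" by blast
  next
    fix q assume "q \<in> copy_of VF EF ` embeddings V E VF EF"
    then obtain \<phi> where "\<phi> \<in> embeddings V E VF EF" "q = copy_of VF EF \<phi>" by blast
    then show "q \<in> ?copies"
      unfolding embeddings_def copy_of_def by (blast intro: inj_on_imp_bij_betw)
  qed
  then show ?thesis unfolding sub_count_def by simp
qed

lemma restrict_comp_automorphism:
  assumes G: "is_graph VF EF" and \<sigma>: "\<sigma> \<in> automorphisms VF EF" and \<phi>: "\<phi> \<in> embeddings V E VF EF"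
  shows "restrict (\<phi> \<circ> \<sigma>) VF \<in> embeddings V E VF EF"
    and "copy_of VF EF (restrict (\<phi> \<circ> \<sigma>) VF) = copy_of VF EF \<phi>"
proof -
  have \<sigma>_bij: "bij_betw \<sigma> VF VF" and \<sigma>_edges: "(\<lambda>e. \<sigma> ` e) ` EF = EF"
    using \<sigma> unfolding automorphisms_def by auto
  have img: "restrict (\<phi> \<circ> \<sigma>) VF ` e = \<phi> ` (\<sigma> ` e)" if "e \<subseteq> VF" for e
    using that by auto
  have VF: "restrict (\<phi> \<circ> \<sigma>) VF ` VF = \<phi> ` VF"
    using img[of VF] \<sigma>_bij by (simp add: bij_betw_def)
  have edges: "(\<lambda>e. restrict (\<phi> \<circ> \<sigma>) VF ` e) ` EF = (\<lambda>e. \<phi> ` e) ` EF"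
  proof -
    have "(\<lambda>e. restrict (\<phi> \<circ> \<sigma>) VF ` e) ` EF = (\<lambda>e. \<phi> ` e) ` ((\<lambda>e. \<sigma> ` e) ` EF)"
      using img is_graph_edge_subset[OF G] by (auto simp: image_image)
    then show ?thesis using \<sigma>_edges by simp
  qed
  show "copy_of VF EF (restrict (\<phi> \<circ> \<sigma>) VF) = copy_of VF EF \<phi>"
    unfolding copy_of_def using VF edges by simp
  have "inj_on (\<phi> \<circ> \<sigma>) VF"
    using \<sigma>_bij \<phi> unfolding embeddings_def by (auto simp: bij_betw_def intro: comp_inj_on)
  moreover have "restrict (\<phi> \<circ> \<sigma>) VF \<in> VF \<rightarrow>\<^sub>E V"
  proof -
    have "\<phi> ` VF \<subseteq> V" using \<phi> unfolding embeddings_def by auto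
    then show ?thesis using bij_betw_apply[OF \<sigma>_bij] by (auto simp: restrict_PiE_iff)
  qed
  moreover have "restrict (\<phi> \<circ> \<sigma>) VF ` e \<in> E" if "e \<in> EF" for e
  proof -
    have "restrict (\<phi> \<circ> \<sigma>) VF ` e \<in> (\<lambda>e. \<phi> ` e) ` EF" using edges that by blast
    then obtain e' where "e' \<in> EF" "restrict (\<phi> \<circ> \<sigma>) VF ` e = \<phi> ` e'" by blast
    then show ?thesis using \<phi> unfolding embeddings_def by simp
  qed
  ultimately show "restrict (\<phi> \<circ> \<sigma>) VF \<in> embeddings V E VF EF"
    unfolding embeddings_def by (simp add: inj_on_def)
qed

lemma same_copy_imp_comp_automorphism:
  assumes G: "is_graph VF EF" and \<phi>: "\<phi> \<in> embeddings V E VF EF" and \<psi>: "\<psi> \<in> embeddings V E VF EF"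
    and same: "copy_of VF EF \<psi> = copy_of VF EF \<phi>"
  obtains \<sigma> where "\<sigma> \<in> automorphisms VF EF" "\<psi> = restrict (\<phi> \<circ> \<sigma>) VF"
proof -
  have \<phi>_inj: "inj_on \<phi> VF" and \<psi>_inj: "inj_on \<psi> VF" and \<psi>_ext: "\<psi> \<in> extensional VF"
    using \<phi> \<psi> unfolding embeddings_def by (auto simp: PiE_iff)
  have VF: "\<psi> ` VF = \<phi> ` VF" and edges: "(\<lambda>e. \<psi> ` e) ` EF = (\<lambda>e. \<phi> ` e) ` EF"
    using same unfolding copy_of_def by auto
  define \<sigma> where "\<sigma> = restrict (inv_into VF \<phi> \<circ> \<psi>) VF"
  have \<sigma>: "\<sigma> v \<in> VF" "\<phi> (\<sigma> v) = \<psi> v" if "v \<in> VF" for v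
  proof -
    have "\<psi> v \<in> \<phi> ` VF" using that VF by blast
    then show "\<sigma> v \<in> VF" "\<phi> (\<sigma> v) = \<psi> v"
      using that by (simp_all add: \<sigma>_def inv_into_into f_inv_into_f)
  qed
  have "inj_on \<sigma> VF"
    by (rule inj_onI) (metis \<sigma>(2) \<psi>_inj inj_onD)
  then have \<sigma>_bij: "bij_betw \<sigma> VF VF"
    using endo_inj_surj[OF is_graph_finite[OF G]] \<sigma>(1) by (auto simp: bij_betw_def)
  have "image \<phi> ` ((\<lambda>e. \<sigma> ` e) ` EF) = image \<phi> ` EF"
    unfolding edges[symmetric]
  proof -
    have "\<phi> ` (\<sigma> ` e) = \<psi> ` e" if "e \<in> EF" for e
      using \<sigma>(2) is_graph_edge_subset[OF G that] unfolding image_image by (intro image_cong) auto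
    from image_cong[OF refl this] show "image \<phi> ` ((\<lambda>e. \<sigma> ` e) ` EF) = (\<lambda>e. \<psi> ` e) ` EF"
      by (simp add: image_image)
  qed
  moreover have "(\<lambda>e. \<sigma> ` e) ` EF \<subseteq> Pow VF" "EF \<subseteq> Pow VF"
    using \<sigma>(1) is_graph_edge_subset[OF G] by blast+
  ultimately have "(\<lambda>e. \<sigma> ` e) ` EF = EF"
    using inj_on_image_Pow[OF \<phi>_inj] by (metis inj_on_image_eq_iff)
  then have "\<sigma> \<in> automorphisms VF EF"
    unfolding automorphisms_def using \<sigma>_bij \<sigma>(1) by (simp add: \<sigma>_def restrict_PiE_iff)
  moreover have "\<psi> = restrict (\<phi> \<circ> \<sigma>) VF"
    using \<psi>_ext \<sigma>(2) by (auto simp: fun_eq_iff extensional_def)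
  ultimately show thesis using that by blast
qed

lemma inj_on_restrict_comp:
  assumes "inj_on \<phi> VF"
  shows "inj_on (\<lambda>\<sigma>. restrict (\<phi> \<circ> \<sigma>) VF) (automorphisms VF EF)"
proof (rule inj_onI)
  fix \<sigma> \<tau> assume \<sigma>: "\<sigma> \<in> automorphisms VF EF" and \<tau>: "\<tau> \<in> automorphisms VF EF"
    and eq: "restrict (\<phi> \<circ> \<sigma>) VF = restrict (\<phi> \<circ> \<tau>) VF"
  show "\<sigma> = \<tau>"
  proof (rule extensionalityI[of _ VF])
    show "\<sigma> \<in> extensional VF" "\<tau> \<in> extensional VF"
      using \<sigma> \<tau> unfolding automorphisms_def by (auto simp: PiE_iff)
    fix v assume v: "v \<in> VF"
    then have "\<phi> (\<sigma> v) = \<phi> (\<tau> v)" using fun_cong[OF eq, of v] by simp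
    moreover have "\<sigma> v \<in> VF" "\<tau> v \<in> VF" using \<sigma> \<tau> v unfolding automorphisms_def by auto
    ultimately show "\<sigma> v = \<tau> v" using assms by (meson inj_onD)
  qed
qed

lemma card_embeddings_same_copy:
  assumes G: "is_graph VF EF" and \<phi>: "\<phi> \<in> embeddings V E VF EF"
  shows "card {\<psi> \<in> embeddings V E VF EF. copy_of VF EF \<psi> = copy_of VF EF \<phi>} = card (automorphisms VF EF)"
proof -
  have "{\<psi> \<in> embeddings V E VF EF. copy_of VF EF \<psi> = copy_of VF EF \<phi>}
      = (\<lambda>\<sigma>. restrict (\<phi> \<circ> \<sigma>) VF) ` automorphisms VF EF"
  proof (intro equalityI subsetI)
    fix \<psi> assume "\<psi> \<in> {\<psi> \<in> embeddings V E VF EF. copy_of VF EF \<psi> = copy_of VF EF \<phi>}"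
    then show "\<psi> \<in> (\<lambda>\<sigma>. restrict (\<phi> \<circ> \<sigma>) VF) ` automorphisms VF EF"
      using same_copy_imp_comp_automorphism[OF G \<phi>, of \<psi>] by blast
  qed (use restrict_comp_automorphism[OF G _ \<phi>] in auto)
  moreover have "inj_on \<phi> VF" using \<phi> unfolding embeddings_def by simp
  ultimately show ?thesis by (simp add: card_image inj_on_restrict_comp)
qed

lemma card_embeddings_eq_sub_count:
  assumes G: "is_graph VF EF" and "finite V"
  shows "card (embeddings V E VF EF) = sub_count V E VF EF * card (automorphisms VF EF)"
proof -
  let ?Emb = "embeddings V E VF EF"
  have fin: "finite ?Emb" using finite_embeddings[OF is_graph_finite[OF G] \<open>finite V\<close>] .
  have "card ?Emb = (\<Sum>q\<in>copy_of VF EF ` ?Emb. card {\<psi> \<in> ?Emb. copy_of VF EF \<psi> = q})"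
    using sum.group[of ?Emb "copy_of VF EF ` ?Emb" "copy_of VF EF" "\<lambda>_. 1 :: nat"] fin by simp
  also have "\<dots> = (\<Sum>q\<in>copy_of VF EF ` ?Emb. card (automorphisms VF EF))"
    using card_embeddings_same_copy[OF G] by (intro sum.cong) auto
  finally show ?thesis by (simp add: sub_count_eq_card_copies[OF G])
qed

lemma automorphisms_nonempty:
  assumes G: "is_graph VF EF"
  shows "card (automorphisms VF EF) \<ge> 1"
proof -
  have "(\<lambda>e. restrict id VF ` e) ` EF = (\<lambda>e. e) ` EF"
    using is_graph_edge_subset[OF G] by (intro image_cong refl) auto
  moreover have "bij_betw (restrict id VF) VF VF"
    using bij_betw_id by (rule bij_betw_cong[THEN iffD1, rotated]) simp
  ultimately have "restrict id VF \<in> automorphisms VF EF"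
    unfolding automorphisms_def by auto
  then show ?thesis
    using finite_automorphisms[OF is_graph_finite[OF G]] card_gt_0_iff
    by (metis One_nat_def Suc_leI empty_iff)
qed

lemma chromatic_number_le: "colorable VF EF k \<Longrightarrow> chromatic_number VF EF \<le> k"
  unfolding chromatic_number_def by (rule Least_le)

lemma chromatic_number_le_card:
  assumes G: "is_graph VF EF"
  shows "chromatic_number VF EF \<le> card VF"
proof -
  obtain g where g: "bij_betw g VF {0..<card VF}"
    using ex_bij_betw_finite_nat[OF is_graph_finite[OF G]] by blast
  have "colorable VF EF (card VF)"
    unfolding colorable_def
  proof (intro exI[of _ g] conjI allI impI ballI)
    show "g v < card VF" if "v \<in> VF" for v using bij_betw_apply[OF g that] by simp
    show "g u \<noteq> g v" if "{u, v} \<in> EF \<and> u \<noteq> v" for u v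
    proof -
      have "u \<in> VF" "v \<in> VF" using that is_graph_edge_subset[OF G, of "{u, v}"] by auto
      then show ?thesis using that inj_onD[OF bij_betw_imp_inj_on[OF g]] by blast
    qed
  qed
  then show ?thesis by (rule chromatic_number_le)
qed

section \<open>Embeddings into a complete multipartite graph plus an edge\<close>

lemma part_vertices_iff: "a \<in> part_vertices r ns \<longleftrightarrow> fst a < r \<and> snd a < ns (fst a)"
  unfolding part_vertices_def by (cases a) simp

lemma finite_part_vertices: "finite (part_vertices r ns)"
proof -
  have "part_vertices r ns = (SIGMA i:{..<r}. {..<ns i})" by (auto simp: part_vertices_iff)
  then show ?thesis by simp
qed

lemma real_c_part:
  assumes "is_graph VF EF"
  shows "real (c_part r ns VF EF) = real (card (embeddings (part_vertices r ns) (part_edges_plus r ns) VF EF))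
    / real (card (automorphisms VF EF))"
  using card_embeddings_eq_sub_count[OF assms finite_part_vertices] automorphisms_nonempty[OF assms]
  unfolding c_part_def by simp

lemma part_edges_plus_iff:
  assumes "a \<in> part_vertices r ns" "b \<in> part_vertices r ns" "a \<noteq> b"
  shows "{a, b} \<in> part_edges_plus r ns \<longleftrightarrow> fst a \<noteq> fst b \<or> (ns 0 \<ge> 2 \<and> {a, b} = {(0, 0), (0, 1)})"
proof
  assume "{a, b} \<in> part_edges_plus r ns"
  then consider x y where "{a, b} = {x, y}" "fst x \<noteq> fst y" | "ns 0 \<ge> 2" "{a, b} = {(0, 0), (0, 1)}"
    unfolding part_edges_plus_def by (auto split: if_splits)
  then show "fst a \<noteq> fst b \<or> (ns 0 \<ge> 2 \<and> {a, b} = {(0, 0), (0, 1)})"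
    by cases (use assms(3) in \<open>auto simp: doubleton_eq_iff\<close>)
next
  assume "fst a \<noteq> fst b \<or> (ns 0 \<ge> 2 \<and> {a, b} = {(0, 0), (0, 1)})"
  then show "{a, b} \<in> part_edges_plus r ns"
  proof
    assume "fst a \<noteq> fst b"
    then show ?thesis unfolding part_edges_plus_def using assms(1,2) by blast
  qed (simp add: part_edges_plus_def)
qed

lemma embeddings_part_iff:
  assumes G: "is_graph VF EF" and \<phi>: "\<phi> \<in> VF \<rightarrow>\<^sub>E part_vertices r ns" "inj_on \<phi> VF"
  shows "\<phi> \<in> embeddings (part_vertices r ns) (part_edges_plus r ns) VF EF \<longleftrightarrow>
    (\<forall>u v. {u, v} \<in> EF \<and> u \<noteq> v \<longrightarrow>
       fst (\<phi> u) \<noteq> fst (\<phi> v) \<or> (ns 0 \<ge> 2 \<and> {\<phi> u, \<phi> v} = {(0, 0), (0, 1)}))"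
proof -
  have edge: "\<phi> ` {u, v} \<in> part_edges_plus r ns \<longleftrightarrow>
      fst (\<phi> u) \<noteq> fst (\<phi> v) \<or> (ns 0 \<ge> 2 \<and> {\<phi> u, \<phi> v} = {(0, 0), (0, 1)})"
    if "{u, v} \<in> EF" "u \<noteq> v" for u v
  proof -
    have uv: "u \<in> VF" "v \<in> VF" using is_graph_edge_subset[OF G that(1)] by auto
    then have "\<phi> u \<in> part_vertices r ns" "\<phi> v \<in> part_vertices r ns" using \<phi>(1) by auto
    moreover have "\<phi> u \<noteq> \<phi> v" using inj_onD[OF \<phi>(2)] that(2) uv by blast
    ultimately show ?thesis using part_edges_plus_iff by simp
  qed
  have "\<phi> \<in> embeddings (part_vertices r ns) (part_edges_plus r ns) VF EF \<longleftrightarrow>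
      (\<forall>e\<in>EF. \<phi> ` e \<in> part_edges_plus r ns)"
    using \<phi> unfolding embeddings_def by simp
  also have "\<dots> \<longleftrightarrow> (\<forall>u v. {u, v} \<in> EF \<and> u \<noteq> v \<longrightarrow> \<phi> ` {u, v} \<in> part_edges_plus r ns)"
  proof (intro iffI allI impI ballI)
    fix e assume "\<forall>u v. {u, v} \<in> EF \<and> u \<noteq> v \<longrightarrow> \<phi> ` {u, v} \<in> part_edges_plus r ns" "e \<in> EF"
    then show "\<phi> ` e \<in> part_edges_plus r ns" by (metis is_graph_edgeE[OF G])
  qed auto
  also have "\<dots> \<longleftrightarrow> (\<forall>u v. {u, v} \<in> EF \<and> u \<noteq> v \<longrightarrow>
       fst (\<phi> u) \<noteq> fst (\<phi> v) \<or> (ns 0 \<ge> 2 \<and> {\<phi> u, \<phi> v} = {(0, 0), (0, 1)}))"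
    by (intro iff_allI imp_cong refl) (use edge in blast)
  finally show ?thesis .
qed

lemma embedding_part_monochromatic_edge:
  assumes G: "is_graph VF EF" and \<phi>: "\<phi> \<in> embeddings (part_vertices r ns) (part_edges_plus r ns) VF EF"
    and uv: "{u, v} \<in> EF" "u \<noteq> v" "fst (\<phi> u) = fst (\<phi> v)"
  shows "ns 0 \<ge> 2" "{\<phi> u, \<phi> v} = {(0, 0), (0, 1)}"
proof -
  have "\<phi> \<in> VF \<rightarrow>\<^sub>E part_vertices r ns" "inj_on \<phi> VF" using \<phi> unfolding embeddings_def by auto
  then show "ns 0 \<ge> 2" "{\<phi> u, \<phi> v} = {(0, 0), (0, 1)}"
    using \<phi> embeddings_part_iff[OF G] uv by blast+
qed

lemma embeddings_part_eq_empty: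
  assumes G: "is_graph VF EF" and chi: "chromatic_number VF EF = r + 1" and ns: "ns 0 < 2"
  shows "embeddings (part_vertices r ns) (part_edges_plus r ns) VF EF = {}"
proof (rule ccontr)
  assume "embeddings (part_vertices r ns) (part_edges_plus r ns) VF EF \<noteq> {}"
  then obtain \<phi> where \<phi>: "\<phi> \<in> embeddings (part_vertices r ns) (part_edges_plus r ns) VF EF" by blast
  have "\<forall>v\<in>VF. fst (\<phi> v) < r"
    using \<phi> unfolding embeddings_def by (auto simp: part_vertices_iff)
  moreover have "fst (\<phi> u) \<noteq> fst (\<phi> v)" if "{u, v} \<in> EF" "u \<noteq> v" for u v
    using embedding_part_monochromatic_edge(1)[OF G \<phi> that] ns by linarith
  ultimately have "colorable VF EF r"
    unfolding colorable_def by (intro exI[of _ "\<lambda>v. fst (\<phi> v)"]) blast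
  then show False using chromatic_number_le chi by fastforce
qed

text \<open>The part assignments of embeddings: colourings whose only monochromatic edge lies in
  colour 0, where it has to be mapped onto the added edge.\<close>
definition defect_coloring :: "nat \<Rightarrow> 'f set \<Rightarrow> 'f set set \<Rightarrow> ('f \<Rightarrow> nat) \<Rightarrow> bool" where
  "defect_coloring r VF EF \<pi> \<longleftrightarrow> \<pi> \<in> VF \<rightarrow>\<^sub>E {..<r} \<and>
     (\<exists>x y. {x, y} \<in> EF \<and> x \<noteq> y \<and> \<pi> x = 0 \<and> \<pi> y = 0 \<and>
        (\<forall>u v. {u, v} \<in> EF \<and> u \<noteq> v \<and> \<pi> u = \<pi> v \<longrightarrow> {u, v} = {x, y}))"

definition embeddings_along ::
    "nat \<Rightarrow> (nat \<Rightarrow> nat) \<Rightarrow> 'f set \<Rightarrow> 'f set set \<Rightarrow> ('f \<Rightarrow> nat) \<Rightarrow> ('f \<Rightarrow> nat \<times> nat) set" where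
  "embeddings_along r ns VF EF \<pi> =
     {\<phi> \<in> embeddings (part_vertices r ns) (part_edges_plus r ns) VF EF. \<forall>v\<in>VF. fst (\<phi> v) = \<pi> v}"

lemma embeddings_part_eq_UN:
  "embeddings (part_vertices r ns) (part_edges_plus r ns) VF EF
    = (\<Union>\<pi>\<in>VF \<rightarrow>\<^sub>E {..<r}. embeddings_along r ns VF EF \<pi>)"
proof (intro equalityI subsetI)
  fix \<phi> assume \<phi>: "\<phi> \<in> embeddings (part_vertices r ns) (part_edges_plus r ns) VF EF"
  then have "restrict (fst \<circ> \<phi>) VF \<in> VF \<rightarrow>\<^sub>E {..<r}"
    unfolding embeddings_def by (auto simp: part_vertices_iff)
  moreover have "\<phi> \<in> embeddings_along r ns VF EF (restrict (fst \<circ> \<phi>) VF)"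
    using \<phi> unfolding embeddings_along_def by simp
  ultimately show "\<phi> \<in> (\<Union>\<pi>\<in>VF \<rightarrow>\<^sub>E {..<r}. embeddings_along r ns VF EF \<pi>)" by blast
qed (auto simp: embeddings_along_def)

lemma defect_coloring_if_embeddings_along:
  assumes G: "is_graph VF EF" and chi: "chromatic_number VF EF = r + 1"
    and \<pi>: "\<pi> \<in> VF \<rightarrow>\<^sub>E {..<r}" and \<phi>: "\<phi> \<in> embeddings_along r ns VF EF \<pi>"
  shows "defect_coloring r VF EF \<pi>"
proof -
  have emb: "\<phi> \<in> embeddings (part_vertices r ns) (part_edges_plus r ns) VF EF"
    and fst_\<phi>: "\<And>v. v \<in> VF \<Longrightarrow> fst (\<phi> v) = \<pi> v" using \<phi> unfolding embeddings_along_def by auto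
  have in_VF: "u \<in> VF" "v \<in> VF" if "{u, v} \<in> EF" for u v
    using is_graph_edge_subset[OF G that] by auto
  have mono: "{\<phi> u, \<phi> v} = {(0, 0), (0, 1)}" if "{u, v} \<in> EF" "u \<noteq> v" "\<pi> u = \<pi> v" for u v
    using embedding_part_monochromatic_edge(2)[OF G emb that(1,2)] that fst_\<phi> in_VF by simp
  obtain x y where xy: "{x, y} \<in> EF" "x \<noteq> y" "\<pi> x = \<pi> y"
  proof (rule ccontr)
    assume "\<not> thesis"
    moreover have "\<forall>v\<in>VF. \<pi> v < r" using \<pi> by auto
    ultimately have "colorable VF EF r" unfolding colorable_def using that by blast
    then show False using chromatic_number_le chi by fastforce
  qed
  have "\<phi> x \<in> {(0, 0), (0, 1)}" using mono[OF xy] by blast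
  then have x0: "\<pi> x = 0" using fst_\<phi>[OF in_VF(1)[OF xy(1)]] by auto
  have uniq: "{u, v} = {x, y}" if "{u, v} \<in> EF" "u \<noteq> v" "\<pi> u = \<pi> v" for u v
  proof -
    have "\<phi> ` {u, v} = \<phi> ` {x, y}" using mono[OF that] mono[OF xy] by simp
    moreover have "inj_on \<phi> VF" using emb unfolding embeddings_def by simp
    moreover have "{u, v} \<subseteq> VF" "{x, y} \<subseteq> VF" using in_VF that(1) xy(1) by auto
    ultimately show ?thesis using inj_on_image_eq_iff by metis
  qed
  have "\<pi> y = 0" using xy(3) x0 by simp
  then show ?thesis unfolding defect_coloring_def
    by (intro conjI[OF \<pi>] exI[of _ x] exI[of _ y]) (use xy(1,2) x0 uniq in blast)
qed

text \<open>The two vertices of part 0 reserved for the endpoints of the added edge.\<close>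
definition defect_slots :: "nat \<Rightarrow> nat" where
  "defect_slots i = (if i = 0 then 2 else 0)"

definition free_size :: "'f set \<Rightarrow> ('f \<Rightarrow> nat) \<Rightarrow> nat \<Rightarrow> nat" where
  "free_size VF \<pi> i = card {v \<in> VF. \<pi> v = i} - defect_slots i"

lemma free_size_le: "finite VF \<Longrightarrow> free_size VF \<pi> i \<le> card VF"
  unfolding free_size_def using card_mono[of VF "{v\<in>VF. \<pi> v = i}"] by auto

lemma card_free_part: "card {j. j < ns i \<and> (i = 0 \<longrightarrow> 2 \<le> j)} = ns i - defect_slots i"
proof (cases "i = 0")
  case True
  then have "{j. j < ns i \<and> (i = 0 \<longrightarrow> 2 \<le> j)} = {2..<ns i}" by auto
  then show ?thesis using True by (simp add: defect_slots_def)
qed (simp add: defect_slots_def)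

lemma card_free_class:
  assumes "finite VF" "x \<in> VF" "y \<in> VF" "x \<noteq> y" "\<pi> x = 0" "\<pi> y = 0"
  shows "card {v \<in> VF - {x, y}. \<pi> v = i} = free_size VF \<pi> i"
proof (cases "i = 0")
  case True
  then have "{v \<in> VF - {x, y}. \<pi> v = i} = {v\<in>VF. \<pi> v = i} - {x, y}" "{x, y} \<subseteq> {v\<in>VF. \<pi> v = i}"
    using assms by auto
  then show ?thesis using True assms by (simp add: free_size_def defect_slots_def card_Diff_subset)
next
  case False
  then have "{v \<in> VF - {x, y}. \<pi> v = i} = {v\<in>VF. \<pi> v = i}" using assms by auto
  then show ?thesis using False by (simp add: free_size_def defect_slots_def)
qed

lemma embeddings_along_eq_pinned:
  assumes G: "is_graph VF EF" and \<pi>: "\<pi> \<in> VF \<rightarrow>\<^sub>E {..<r}" and ns: "ns 0 \<ge> 2"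
    and xy: "{x, y} \<in> EF" "x \<noteq> y" "\<pi> x = 0" "\<pi> y = 0"
    and uniq: "\<And>u v. {u, v} \<in> EF \<Longrightarrow> u \<noteq> v \<Longrightarrow> \<pi> u = \<pi> v \<Longrightarrow> {u, v} = {x, y}"
  shows "embeddings_along r ns VF EF \<pi> = {f \<in> extensional VF. inj_on f VF \<and>
    (\<forall>v\<in>VF. f v \<in> {\<pi> v} \<times> {..<ns (\<pi> v)}) \<and> {f x, f y} = {(0, 0), (0, 1)}}"
proof -
  have xy_VF: "x \<in> VF" "y \<in> VF" using is_graph_edge_subset[OF G xy(1)] by auto
  have typed: "f \<in> VF \<rightarrow>\<^sub>E part_vertices r ns \<and> (\<forall>v\<in>VF. fst (f v) = \<pi> v) \<longleftrightarrow>
      f \<in> extensional VF \<and> (\<forall>v\<in>VF. f v \<in> {\<pi> v} \<times> {..<ns (\<pi> v)})" for f :: "'a \<Rightarrow> nat \<times> nat"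
    using \<pi> by (auto simp: PiE_iff part_vertices_iff mem_Times_iff)
  show ?thesis
  proof (intro equalityI subsetI)
    fix f assume f: "f \<in> embeddings_along r ns VF EF \<pi>"
    then have emb: "f \<in> embeddings (part_vertices r ns) (part_edges_plus r ns) VF EF"
      and "\<forall>v\<in>VF. fst (f v) = \<pi> v" unfolding embeddings_along_def by auto
    moreover have "{f x, f y} = {(0, 0), (0, 1)}"
      using embedding_part_monochromatic_edge(2)[OF G emb xy(1,2)] calculation(2) xy xy_VF by simp
    ultimately show "f \<in> {f \<in> extensional VF. inj_on f VF \<and>
        (\<forall>v\<in>VF. f v \<in> {\<pi> v} \<times> {..<ns (\<pi> v)}) \<and> {f x, f y} = {(0, 0), (0, 1)}}"
      using typed[of f] unfolding embeddings_def by auto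
  next
    fix f assume "f \<in> {f \<in> extensional VF. inj_on f VF \<and>
        (\<forall>v\<in>VF. f v \<in> {\<pi> v} \<times> {..<ns (\<pi> v)}) \<and> {f x, f y} = {(0, 0), (0, 1)}}"
    then have f: "f \<in> VF \<rightarrow>\<^sub>E part_vertices r ns" "\<forall>v\<in>VF. fst (f v) = \<pi> v" "inj_on f VF"
      and pinned: "{f x, f y} = {(0, 0), (0, 1)}" using typed[of f] by auto
    have "fst (f u) \<noteq> fst (f v) \<or> (ns 0 \<ge> 2 \<and> {f u, f v} = {(0, 0), (0, 1)})"
      if "{u, v} \<in> EF" "u \<noteq> v" for u v
    proof (cases "\<pi> u = \<pi> v")
      case True
      then have "{u, v} = {x, y}" using uniq that by blast
      then have "{f u, f v} = {f x, f y}" by (auto simp: doubleton_eq_iff)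
      then show ?thesis using pinned ns by simp
    next
      case False
      then show ?thesis using f(2) is_graph_edge_subset[OF G that(1)] by simp
    qed
    then have "f \<in> embeddings (part_vertices r ns) (part_edges_plus r ns) VF EF"
      using embeddings_part_iff[OF G f(1,3)] by blast
    then show "f \<in> embeddings_along r ns VF EF \<pi>"
      unfolding embeddings_along_def using f(2) by simp
  qed
qed

lemma card_embeddings_along:
  assumes G: "is_graph VF EF" and \<pi>: "defect_coloring r VF EF \<pi>" and ns: "ns 0 \<ge> 2"
  shows "card (embeddings_along r ns VF EF \<pi>)
    = 2 * (\<Prod>i<r. \<Prod>j<free_size VF \<pi> i. ns i - defect_slots i - j)"
proof -
  obtain x y where xy: "{x, y} \<in> EF" "x \<noteq> y" "\<pi> x = 0" "\<pi> y = 0"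
    and uniq: "\<And>u v. {u, v} \<in> EF \<Longrightarrow> u \<noteq> v \<Longrightarrow> \<pi> u = \<pi> v \<Longrightarrow> {u, v} = {x, y}"
    and \<pi>_range: "\<pi> \<in> VF \<rightarrow>\<^sub>E {..<r}" using \<pi> unfolding defect_coloring_def by blast
  have xy_VF: "x \<in> VF" "y \<in> VF" using is_graph_edge_subset[OF G xy(1)] by auto
  have fin: "finite VF" by (rule is_graph_finite[OF G])
  define A where "A = VF - {x, y}"
  define T where "T i = {j. j < ns i \<and> (i = 0 \<longrightarrow> 2 \<le> j)}" for i
  have minus_pinned: "{\<pi> v} \<times> {..<ns (\<pi> v)} - {(0, 0), (0, 1)} = {\<pi> v} \<times> T (\<pi> v)" for v
    unfolding T_def by auto
  have "card (embeddings_along r ns VF EF \<pi>) = card {f \<in> extensional VF. inj_on f VF \<and>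
      (\<forall>v\<in>VF. f v \<in> {\<pi> v} \<times> {..<ns (\<pi> v)}) \<and> {f x, f y} = {(0, 0), (0, 1)}}"
    by (rule arg_cong[OF embeddings_along_eq_pinned[of VF EF \<pi> r ns x y, OF G \<pi>_range ns xy uniq]])
  also have "\<dots> = 2 * card {g \<in> extensional A. inj_on g A \<and>
      (\<forall>v\<in>A. g v \<in> {\<pi> v} \<times> {..<ns (\<pi> v)} - {(0, 0), (0, 1)})}"
    unfolding A_def by (rule card_inj_pinned_pair) (use xy_VF xy ns in auto)
  also have "\<dots> = 2 * card {g \<in> extensional A. inj_on g A \<and> (\<forall>v\<in>A. g v \<in> {\<pi> v} \<times> T (\<pi> v))}"
    unfolding minus_pinned ..
  also have "\<dots> = 2 * (\<Prod>i<r. card {h \<in> {v\<in>A. \<pi> v = i} \<rightarrow>\<^sub>E T i. inj_on h {v\<in>A. \<pi> v = i}})"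
    using \<pi>_range by (subst card_typed_injections) (auto simp: A_def)
  also have "\<dots> = 2 * (\<Prod>i<r. \<Prod>j<free_size VF \<pi> i. ns i - defect_slots i - j)"
  proof -
    have "finite {v\<in>A. \<pi> v = i}" "finite (T i)" for i
      using fin unfolding A_def T_def by auto
    then show ?thesis
      using card_free_class[OF fin xy_VF xy(2-4)] card_free_part
      by (simp add: card_injections A_def T_def)
  qed
  finally show ?thesis .
qed

lemma finite_defect_colorings: "finite VF \<Longrightarrow> finite {\<pi>. defect_coloring r VF EF \<pi>}"
  by (rule finite_subset[of _ "VF \<rightarrow>\<^sub>E {..<r}"]) (auto simp: defect_coloring_def intro: finite_PiE)

lemma card_embeddings_part:
  assumes G: "is_graph VF EF" and chi: "chromatic_number VF EF = r + 1"
  shows "card (embeddings (part_vertices r ns) (part_edges_plus r ns) VF EF)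
    = (\<Sum>\<pi> | defect_coloring r VF EF \<pi>. card (embeddings_along r ns VF EF \<pi>))"
proof -
  let ?C = "VF \<rightarrow>\<^sub>E {..<r}"
  have fin: "finite VF" by (rule is_graph_finite[OF G])
  have "card (embeddings (part_vertices r ns) (part_edges_plus r ns) VF EF)
      = (\<Sum>\<pi>\<in>?C. card (embeddings_along r ns VF EF \<pi>))"
    unfolding embeddings_part_eq_UN
  proof (rule card_UN_disjoint)
    show "finite ?C" using fin by (simp add: finite_PiE)
    show "\<forall>\<pi>\<in>?C. finite (embeddings_along r ns VF EF \<pi>)"
      using finite_embeddings[OF fin finite_part_vertices] unfolding embeddings_along_def by auto
    show "\<forall>\<pi>\<in>?C. \<forall>\<pi>'\<in>?C. \<pi> \<noteq> \<pi>' \<longrightarrow> embeddings_along r ns VF EF \<pi> \<inter> embeddings_along r ns VF EF \<pi>' = {}"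
    proof (intro ballI impI)
      fix \<pi> \<pi>' assume "\<pi> \<in> ?C" "\<pi>' \<in> ?C" "\<pi> \<noteq> \<pi>'"
      then obtain v where "v \<in> VF" "\<pi> v \<noteq> \<pi>' v" by (metis PiE_ext)
      then show "embeddings_along r ns VF EF \<pi> \<inter> embeddings_along r ns VF EF \<pi>' = {}"
        unfolding embeddings_along_def by auto
    qed
  qed
  also have "\<dots> = (\<Sum>\<pi> | defect_coloring r VF EF \<pi>. card (embeddings_along r ns VF EF \<pi>))"
  proof (rule sum.mono_neutral_right)
    show "finite ?C" using fin by (simp add: finite_PiE)
    show "{\<pi>. defect_coloring r VF EF \<pi>} \<subseteq> ?C" unfolding defect_coloring_def by auto
    show "\<forall>\<pi>\<in>?C - {\<pi>. defect_coloring r VF EF \<pi>}. card (embeddings_along r ns VF EF \<pi>) = 0"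
    proof
      fix \<pi> assume "\<pi> \<in> ?C - {\<pi>. defect_coloring r VF EF \<pi>}"
      then have "embeddings_along r ns VF EF \<pi> = {}"
        using defect_coloring_if_embeddings_along[OF G chi] by blast
      then show "card (embeddings_along r ns VF EF \<pi>) = 0" by simp
    qed
  qed
  finally show ?thesis .
qed

lemma sum_free_size:
  assumes G: "is_graph VF EF" and \<pi>: "defect_coloring r VF EF \<pi>"
  shows "(\<Sum>i<r. free_size VF \<pi> i) = card VF - 2"
proof -
  obtain x y where xy: "{x, y} \<in> EF" "x \<noteq> y" "\<pi> x = 0" "\<pi> y = 0" and \<pi>_range: "\<pi> \<in> VF \<rightarrow>\<^sub>E {..<r}"
    using \<pi> unfolding defect_coloring_def by blast
  have fin: "finite VF" by (rule is_graph_finite[OF G])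
  have "0 < r" using \<pi>_range is_graph_edge_subset[OF G xy(1)] by fastforce
  have "card VF = (\<Sum>i<r. card {v\<in>VF. \<pi> v = i})"
  proof -
    have "VF = (\<Union>i<r. {v\<in>VF. \<pi> v = i})" using \<pi>_range by auto
    also have "card \<dots> = (\<Sum>i<r. card {v\<in>VF. \<pi> v = i})"
      by (rule card_UN_disjoint) (use fin in auto)
    finally show ?thesis .
  qed
  moreover have "card {v\<in>VF. \<pi> v = i} = free_size VF \<pi> i + defect_slots i" for i
  proof -
    have "{x, y} \<subseteq> {v\<in>VF. \<pi> v = 0}" using xy is_graph_edge_subset[OF G xy(1)] by auto
    then have "2 \<le> card {v\<in>VF. \<pi> v = 0}"
      using card_mono[of "{v\<in>VF. \<pi> v = 0}" "{x, y}"] fin xy(2) by simp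
    then show ?thesis by (simp add: free_size_def defect_slots_def)
  qed
  moreover have "(\<Sum>i<r. defect_slots i) = 2"
    using \<open>0 < r\<close> by (simp add: defect_slots_def sum.If_cases lessThan_def)
  ultimately show ?thesis by (simp add: sum.distrib)
qed

lemma card_embeddings_part_le:
  assumes G: "is_graph VF EF" and chi: "chromatic_number VF EF = r + 1" and n: "(\<Sum>i<r. ns i) = n"
  shows "card (embeddings (part_vertices r ns) (part_edges_plus r ns) VF EF)
    \<le> 2 * card {\<pi>. defect_coloring r VF EF \<pi>} * n ^ (card VF - 2)"
proof (cases "ns 0 \<ge> 2")
  case True
  have "card (embeddings_along r ns VF EF \<pi>) \<le> 2 * n ^ (card VF - 2)"
    if \<pi>: "defect_coloring r VF EF \<pi>" for \<pi>
  proof -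
    have "(\<Prod>j<free_size VF \<pi> i. ns i - defect_slots i - j) \<le> n ^ free_size VF \<pi> i" if "i < r" for i
    proof -
      have "ns i \<le> n" using n that by (metis finite_lessThan lessThan_iff member_le_sum zero_le)
      then have "(\<Prod>j<free_size VF \<pi> i. ns i - defect_slots i - j) \<le> (\<Prod>j<free_size VF \<pi> i. n)"
        by (intro prod_mono) auto
      then show ?thesis by simp
    qed
    then have "(\<Prod>i<r. \<Prod>j<free_size VF \<pi> i. ns i - defect_slots i - j) \<le> (\<Prod>i<r. n ^ free_size VF \<pi> i)"
      by (intro prod_mono) auto
    also have "\<dots> = n ^ (card VF - 2)"
      using power_sum[of n "free_size VF \<pi>" "{..<r}"] sum_free_size[OF G \<pi>] by simp
    finally show ?thesis by (simp add: card_embeddings_along[where ns = ns, OF G \<pi> True])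
  qed
  then have "card (embeddings (part_vertices r ns) (part_edges_plus r ns) VF EF)
      \<le> (\<Sum>\<pi> | defect_coloring r VF EF \<pi>. 2 * n ^ (card VF - 2))"
    unfolding card_embeddings_part[OF G chi] by (intro sum_mono) auto
  then show ?thesis by (simp add: mult_ac)
next
  case False
  then show ?thesis using embeddings_part_eq_empty[OF G chi] by simp
qed

section \<open>The copy polynomial\<close>

definition slots :: "nat \<Rightarrow> 'f set \<Rightarrow> ('f \<Rightarrow> nat) \<Rightarrow> (nat \<times> nat) set" where
  "slots r VF \<pi> = (SIGMA i:{..<r}. {..<free_size VF \<pi> i})"

text \<open>At the part sizes this is the number of embeddings (\<open>real_card_embeddings_part\<close>): the
  factor 2 orients the edge mapped onto the added edge, and the slot \<open>(i, j)\<close> stands for the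
  \<open>j\<close>-th free vertex of colour \<open>i\<close>.\<close>
definition copy_poly :: "nat \<Rightarrow> 'f set \<Rightarrow> 'f set set \<Rightarrow> (nat \<Rightarrow> real) \<Rightarrow> real" where
  "copy_poly r VF EF x = (\<Sum>\<pi> | defect_coloring r VF EF \<pi>.
     2 * (\<Prod>(i, j)\<in>slots r VF \<pi>. x i - real (defect_slots i) - real j))"

definition class_weight :: "nat \<Rightarrow> 'f set \<Rightarrow> 'f set set \<Rightarrow> nat \<Rightarrow> nat" where
  "class_weight r VF EF i = (\<Sum>\<pi> | defect_coloring r VF EF \<pi>. free_size VF \<pi> i)"

lemma card_slots:
  assumes "is_graph VF EF" "defect_coloring r VF EF \<pi>"
  shows "card (slots r VF \<pi>) = card VF - 2" "finite (slots r VF \<pi>)"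
  unfolding slots_def using sum_free_size[OF assms] by simp_all

lemma sum_slots: "(\<Sum>(i, j)\<in>slots r VF \<pi>. f i) = (\<Sum>i<r. real (free_size VF \<pi> i) * f i)"
  unfolding slots_def by (simp add: sum.Sigma[symmetric] mult.commute)

lemma copy_poly_cong: "(\<And>i. i < r \<Longrightarrow> x i = y i) \<Longrightarrow> copy_poly r VF EF x = copy_poly r VF EF y"
  unfolding copy_poly_def slots_def by (auto intro!: sum.cong prod.cong simp: split_beta)

lemma real_card_embeddings_part:
  assumes G: "is_graph VF EF" and chi: "chromatic_number VF EF = r + 1" and ns: "ns 0 \<ge> 2"
  shows "real (card (embeddings (part_vertices r ns) (part_edges_plus r ns) VF EF))
    = copy_poly r VF EF (\<lambda>i. real (ns i))"
proof -
  have "real (\<Prod>i<r. \<Prod>j<free_size VF \<pi> i. ns i - defect_slots i - j)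
      = (\<Prod>(i, j)\<in>slots r VF \<pi>. real (ns i) - real (defect_slots i) - real j)" for \<pi>
  proof -
    have "real (\<Prod>j<free_size VF \<pi> i. ns i - defect_slots i - j)
        = (\<Prod>j<free_size VF \<pi> i. real (ns i) - real (defect_slots i) - real j)" for i
    proof -
      have "defect_slots i \<le> ns i" using ns by (simp add: defect_slots_def)
      then show ?thesis by (simp only: of_nat_prod_lessThan_diff of_nat_diff)
    qed
    then have "real (\<Prod>i<r. \<Prod>j<free_size VF \<pi> i. ns i - defect_slots i - j)
        = (\<Prod>i<r. \<Prod>j<free_size VF \<pi> i. real (ns i) - real (defect_slots i) - real j)"
      unfolding of_nat_prod[of _ "{..<r}"] by (rule prod.cong[OF refl])
    then show ?thesis unfolding slots_def by (subst (asm) prod.Sigma) auto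
  qed
  then show ?thesis
    unfolding card_embeddings_part[OF G chi] copy_poly_def
    by (simp add: card_embeddings_along[where ns = ns, OF G _ ns] of_nat_sum)
qed

lemma defect_coloring_transpose:
  assumes G: "is_graph VF EF" and \<pi>: "defect_coloring r VF EF \<pi>" and i: "1 \<le> i" "i < r"
  shows "defect_coloring r VF EF (restrict (transpose 1 i \<circ> \<pi>) VF)"
proof -
  let ?\<tau> = "transpose (1::nat) i"
  obtain x y where xy: "{x, y} \<in> EF" "x \<noteq> y" "\<pi> x = 0" "\<pi> y = 0"
    and uniq: "\<forall>u v. {u, v} \<in> EF \<and> u \<noteq> v \<and> \<pi> u = \<pi> v \<longrightarrow> {u, v} = {x, y}"
    and \<pi>_range: "\<pi> \<in> VF \<rightarrow>\<^sub>E {..<r}" using \<pi> unfolding defect_coloring_def by blast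
  have in_VF: "u \<in> VF" "v \<in> VF" if "{u, v} \<in> EF" for u v
    using is_graph_edge_subset[OF G that] by auto
  have "?\<tau> (\<pi> v) < r" if "v \<in> VF" for v
    using that i \<pi>_range by (auto simp: transpose_def)
  then have "restrict (?\<tau> \<circ> \<pi>) VF \<in> VF \<rightarrow>\<^sub>E {..<r}" by (simp add: restrict_PiE_iff)
  moreover have "restrict (?\<tau> \<circ> \<pi>) VF x = 0" "restrict (?\<tau> \<circ> \<pi>) VF y = 0"
    using xy in_VF[OF xy(1)] i by (auto simp: transpose_def)
  moreover have "{u, v} = {x, y}"
    if "{u, v} \<in> EF" "u \<noteq> v" "restrict (?\<tau> \<circ> \<pi>) VF u = restrict (?\<tau> \<circ> \<pi>) VF v" for u v
  proof -
    have "\<pi> u = \<pi> v" using that(3) in_VF[OF that(1)] inj_transpose[of 1 i] by (simp add: inj_eq)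
    then show ?thesis using that(1,2) uniq by blast
  qed
  ultimately show ?thesis unfolding defect_coloring_def using xy(1,2) by blast
qed

lemma class_weight_transpose:
  assumes G: "is_graph VF EF" and i: "1 \<le> i" "i < r"
  shows "class_weight r VF EF i = class_weight r VF EF 1"
proof -
  define h where "h \<pi> = restrict (transpose 1 i \<circ> \<pi>) VF" for \<pi> :: "'a \<Rightarrow> nat"
  have hh: "h (h \<pi>) = \<pi>" if "defect_coloring r VF EF \<pi>" for \<pi>
    using that unfolding defect_coloring_def h_def by (auto simp: fun_eq_iff PiE_iff extensional_def)
  have "{v\<in>VF. h \<pi> v = 1} = {v\<in>VF. \<pi> v = i}" for \<pi>
    using i by (auto simp: h_def transpose_def)
  moreover have "defect_slots 1 = defect_slots i" using i by (simp add: defect_slots_def)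
  ultimately have size: "free_size VF (h \<pi>) 1 = free_size VF \<pi> i" for \<pi>
    unfolding free_size_def by simp
  have closed: "defect_coloring r VF EF (h \<pi>)" if "defect_coloring r VF EF \<pi>" for \<pi>
    unfolding h_def by (rule defect_coloring_transpose[OF G that i])
  show ?thesis unfolding class_weight_def
  proof (rule sum.reindex_bij_witness[where i = h and j = h])
    fix \<pi> assume "\<pi> \<in> {\<pi>. defect_coloring r VF EF \<pi>}"
    then show "h (h \<pi>) = \<pi>" "h \<pi> \<in> {\<pi>. defect_coloring r VF EF \<pi>}"
      "free_size VF (h \<pi>) 1 = free_size VF \<pi> i" using hh closed size by auto
  next
    fix \<pi> assume "\<pi> \<in> {\<pi>. defect_coloring r VF EF \<pi>}"
    then show "h (h \<pi>) = \<pi>" "h \<pi> \<in> {\<pi>. defect_coloring r VF EF \<pi>}" using hh closed by auto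
  qed
qed

lemma sum_class_weight:
  fixes a :: "nat \<Rightarrow> real"
  assumes G: "is_graph VF EF" and r: "r > 0" and a: "(\<Sum>i<r. a i) = 0"
  shows "(\<Sum>i<r. real (class_weight r VF EF i) * a i)
    = (real (class_weight r VF EF 0) - real (class_weight r VF EF 1)) * a 0"
proof -
  let ?w = "\<lambda>i. real (class_weight r VF EF i)"
  have split: "{..<r} = insert 0 {1..<r}" using r by auto
  have "(\<Sum>i\<in>{1..<r}. ?w i * a i) = (\<Sum>i\<in>{1..<r}. ?w 1 * a i)"
  proof (rule sum.cong[OF refl])
    fix i assume "i \<in> {1..<r}"
    then show "?w i * a i = ?w 1 * a i" using class_weight_transpose[OF G, of i r] by simp
  qed
  moreover have "(\<Sum>i\<in>{1..<r}. a i) = - a 0" using a unfolding split by simp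
  ultimately have "(\<Sum>i\<in>{1..<r}. ?w i * a i) = - ?w 1 * a 0"
    by (simp add: sum_distrib_left[symmetric])
  then show ?thesis unfolding split by (simp add: algebra_simps)
qed

lemma slot_product_linearization:
  fixes x y :: "nat \<Rightarrow> real" and u M :: real
  assumes G: "is_graph VF EF" and \<pi>: "defect_coloring r VF EF \<pi>" and u: "u \<ge> 1"
    and x: "\<forall>i<r. \<bar>x i - u\<bar> \<le> 1" and y: "\<forall>i<r. \<bar>y i - x i\<bar> \<le> M" and M: "M \<ge> 1" "M \<le> r * u"
  defines "d \<equiv> card VF - 2"
  shows "\<bar>u * ((\<Prod>(i, j)\<in>slots r VF \<pi>. y i - real (defect_slots i) - real j)
          - (\<Prod>(i, j)\<in>slots r VF \<pi>. x i - real (defect_slots i) - real j))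
        - u ^ d * (\<Sum>i<r. real (free_size VF \<pi> i) * (y i - x i))\<bar> * u
    \<le> (real d)\<^sup>2 * (real (card VF) + 4 + r) ^ (2 * d) * M\<^sup>2 * u ^ d"
proof -
  define \<beta> where "\<beta> z = x (fst z) - real (defect_slots (fst z)) - real (snd z) - u" for z :: "nat \<times> nat"
  define \<alpha> where "\<alpha> z = y (fst z) - x (fst z)" for z :: "nat \<times> nat"
  have bounds: "\<bar>\<beta> z\<bar> \<le> real (card VF) + 3 \<and> \<bar>\<alpha> z\<bar> \<le> M" if "z \<in> slots r VF \<pi>" for z
  proof -
    have z: "fst z < r" "snd z < free_size VF \<pi> (fst z)" using that by (auto simp: slots_def)
    then have "real (snd z) \<le> real (card VF)"
      using free_size_le[OF is_graph_finite[OF G], of \<pi> "fst z"] by simp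
    moreover have "real (defect_slots (fst z)) \<le> 2" by (simp add: defect_slots_def)
    ultimately show ?thesis using x y z(1) unfolding \<beta>_def \<alpha>_def by (force simp: abs_le_iff)
  qed
  have "\<bar>u * ((\<Prod>z\<in>slots r VF \<pi>. u + \<beta> z + \<alpha> z) - (\<Prod>z\<in>slots r VF \<pi>. u + \<beta> z))
        - u ^ card (slots r VF \<pi>) * (\<Sum>z\<in>slots r VF \<pi>. \<alpha> z)\<bar> * u
      \<le> (real (card (slots r VF \<pi>)))\<^sup>2 * (1 + (real (card VF) + 3) + r) ^ (2 * card (slots r VF \<pi>))
          * M\<^sup>2 * u ^ card (slots r VF \<pi>)"
    using bounds M u by (intro prod_linearization_bound card_slots(2)[OF G \<pi>]) auto
  moreover have "(\<Sum>z\<in>slots r VF \<pi>. \<alpha> z) = (\<Sum>i<r. real (free_size VF \<pi> i) * (y i - x i))"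
    using sum_slots[of "\<lambda>i. y i - x i"] by (simp add: \<alpha>_def split_def)
  ultimately show ?thesis
    unfolding d_def card_slots(1)[OF G \<pi>, symmetric] \<alpha>_def \<beta>_def
    by (simp add: split_def algebra_simps)
qed

lemma copy_poly_linearization:
  fixes x y :: "nat \<Rightarrow> real" and u M :: real
  assumes G: "is_graph VF EF" and r: "r > 0" and u: "u \<ge> 1"
    and x: "\<forall>i<r. \<bar>x i - u\<bar> \<le> 1" and y: "\<forall>i<r. \<bar>y i - x i\<bar> \<le> M" and M: "M \<ge> 1" "M \<le> r * u"
    and balanced: "(\<Sum>i<r. y i - x i) = 0"
  defines "d \<equiv> card VF - 2"
  shows "\<bar>u * (copy_poly r VF EF y - copy_poly r VF EF x)
          - 2 * (real (class_weight r VF EF 0) - real (class_weight r VF EF 1)) * (y 0 - x 0) * u ^ d\<bar> * u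
    \<le> 2 * card {\<pi>. defect_coloring r VF EF \<pi>} * ((real d)\<^sup>2 * (real (card VF) + 4 + r) ^ (2 * d))
        * M\<^sup>2 * u ^ d"
proof -
  let ?P = "{\<pi>. defect_coloring r VF EF \<pi>}"
  let ?prod = "\<lambda>x \<pi>. \<Prod>(i, j)\<in>slots r VF \<pi>. x i - real (defect_slots i) - real j"
  let ?C = "(real d)\<^sup>2 * (real (card VF) + 4 + r) ^ (2 * d)"
  define D where "D \<pi> = u * (?prod y \<pi> - ?prod x \<pi>) - u ^ d * (\<Sum>i<r. real (free_size VF \<pi> i) * (y i - x i))"
    for \<pi>
  have fin: "finite ?P" by (rule finite_defect_colorings[OF is_graph_finite[OF G]])
  have "(\<Sum>\<pi>\<in>?P. \<Sum>i<r. real (free_size VF \<pi> i) * (y i - x i))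
      = (\<Sum>i<r. real (class_weight r VF EF i) * (y i - x i))"
    unfolding class_weight_def by (simp add: sum.swap[of _ ?P] sum_distrib_right)
  also have "\<dots> = (real (class_weight r VF EF 0) - real (class_weight r VF EF 1)) * (y 0 - x 0)"
    by (rule sum_class_weight[OF G r balanced])
  finally have weights: "(\<Sum>\<pi>\<in>?P. \<Sum>i<r. real (free_size VF \<pi> i) * (y i - x i))
      = (real (class_weight r VF EF 0) - real (class_weight r VF EF 1)) * (y 0 - x 0)" .
  have "u * (copy_poly r VF EF y - copy_poly r VF EF x) = (\<Sum>\<pi>\<in>?P. 2 * (u * (?prod y \<pi> - ?prod x \<pi>)))"
    unfolding copy_poly_def by (simp add: sum_subtractf sum_distrib_left algebra_simps)
  moreover have "(\<Sum>\<pi>\<in>?P. 2 * D \<pi>) = (\<Sum>\<pi>\<in>?P. 2 * (u * (?prod y \<pi> - ?prod x \<pi>)))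
      - 2 * u ^ d * (\<Sum>\<pi>\<in>?P. \<Sum>i<r. real (free_size VF \<pi> i) * (y i - x i))"
    unfolding D_def by (simp only: right_diff_distrib sum_subtractf sum_distrib_left mult.assoc)
  ultimately have "u * (copy_poly r VF EF y - copy_poly r VF EF x)
      - 2 * (real (class_weight r VF EF 0) - real (class_weight r VF EF 1)) * (y 0 - x 0) * u ^ d
      = (\<Sum>\<pi>\<in>?P. 2 * D \<pi>)"
    unfolding weights by (simp add: algebra_simps)
  then have "\<bar>u * (copy_poly r VF EF y - copy_poly r VF EF x)
      - 2 * (real (class_weight r VF EF 0) - real (class_weight r VF EF 1)) * (y 0 - x 0) * u ^ d\<bar> * u
      = \<bar>\<Sum>\<pi>\<in>?P. 2 * D \<pi>\<bar> * u" by simp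
  also have "\<dots> \<le> (\<Sum>\<pi>\<in>?P. \<bar>2 * D \<pi>\<bar>) * u"
    using u by (intro mult_right_mono sum_abs) auto
  also have "\<dots> = (\<Sum>\<pi>\<in>?P. 2 * (\<bar>D \<pi>\<bar> * u))"
    by (simp add: sum_distrib_right abs_mult mult.assoc)
  also have "\<dots> \<le> (\<Sum>\<pi>\<in>?P. 2 * (?C * M\<^sup>2 * u ^ d))"
    using slot_product_linearization[OF G _ u x y M] unfolding D_def d_def
    by (intro sum_mono) auto
  finally show ?thesis by (simp add: mult_ac)
qed

section \<open>The perturbation estimate\<close>

text \<open>All parts other than part 0 carry the same class weight (\<open>class_weight_transpose\<close>), which
  is why only the deviation of part 0 enters the linear term.\<close>
definition zeta_F :: "nat \<Rightarrow> 'f set \<Rightarrow> 'f set set \<Rightarrow> real" where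
  "zeta_F r VF EF = - 2 * (real (class_weight r VF EF 0) - real (class_weight r VF EF 1))
     / (real (card (automorphisms VF EF)) * real r ^ (card VF - 3))"

definition perturbation_constant :: "nat \<Rightarrow> 'f set \<Rightarrow> 'f set set \<Rightarrow> real" where
  "perturbation_constant r VF EF =
     (let d = card VF - 2; P = real (card {\<pi>. defect_coloring r VF EF \<pi>}) in
      (2 * P * ((real d)\<^sup>2 * (real (card VF) + 4 + r) ^ (2 * d)) * (real r)\<^sup>2 + 8 * P * (real r)\<^sup>2)
        / real (card (automorphisms VF EF)) + 2 * real r * \<bar>zeta_F r VF EF\<bar>)"

locale turan_perturbation =
  fixes r :: nat and VF :: "'f set" and EF :: "'f set set"
    and n :: nat and n' ns :: "nat \<Rightarrow> nat" and M :: nat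
  assumes graph: "is_graph VF EF" and chi: "chromatic_number VF EF = r + 1" and r2: "r \<ge> 2"
    and n_large: "4 * r < n" and sum_n': "(\<Sum>i<r. n' i) = n"
    and balanced: "\<forall>i<r. \<forall>j<r. \<bar>int (n' i) - int (n' j)\<bar> \<le> 1"
    and sum_ns: "(\<Sum>i<r. ns i) = n"
    and deviation: "\<forall>i<r. \<bar>real (ns i) - real (n' i)\<bar> \<le> real M" and M_le: "M \<le> n"
begin

definition u :: real where "u = real n / real r"

definition aut :: real where "aut = real (card (automorphisms VF EF))"

definition weight_gap :: real where
  "weight_gap = real (class_weight r VF EF 0) - real (class_weight r VF EF 1)"

definition count :: "(nat \<Rightarrow> nat) \<Rightarrow> real" where
  "count ms = real (card (embeddings (part_vertices r ms) (part_edges_plus r ms) VF EF))"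

lemma r_pos: "r > 0" using r2 by simp

lemma card_VF_ge_3: "card VF \<ge> 3"
  using chromatic_number_le_card[OF graph] chi r2 by simp

lemma n_eq: "real n = real r * u" using r_pos by (simp add: u_def)

lemma u_gt_4: "u > 4"
  using n_large r_pos unfolding u_def by (simp add: field_simps flip: of_nat_mult)

lemma aut_ge_1: "aut \<ge> 1" using automorphisms_nonempty[OF graph] by (simp add: aut_def)

lemma n'_near_u: "\<forall>i<r. \<bar>real (n' i) - u\<bar> \<le> 1"
  using balanced_near_average[OF r_pos sum_n' balanced] by (simp add: u_def)

lemma n'_0_ge_2: "n' 0 \<ge> 2"
  using n'_near_u r_pos u_gt_4 by fastforce

lemma real_c_part_eq: "real (c_part r ms VF EF) = count ms / aut"
  unfolding count_def aut_def by (rule real_c_part[OF graph])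

lemma zeta_term:
  "zeta_F r VF EF * a * real n ^ (card VF - 3) = - 2 * weight_gap * a * u ^ (card VF - 2 - 1) / aut"
proof -
  have "real n ^ (card VF - 3) = real r ^ (card VF - 3) * u ^ (card VF - 3)"
    by (simp add: n_eq power_mult_distrib)
  moreover have "card VF - 3 = card VF - 2 - 1" by simp
  ultimately show ?thesis
    unfolding zeta_F_def weight_gap_def aut_def[symmetric] using r_pos aut_ge_1 by (simp add: field_simps)
qed

abbreviation defect_count :: real where
  "defect_count \<equiv> real (card {\<pi>. defect_coloring r VF EF \<pi>})"

abbreviation linear_error :: real where
  "linear_error \<equiv> 2 * defect_count * ((real (card VF - 2))\<^sup>2
     * (real (card VF) + 4 + r) ^ (2 * (card VF - 2)))"

lemma perturbation_constant_ge:
  "linear_error * (real r)\<^sup>2 / aut \<le> perturbation_constant r VF EF"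
  "4 * (2 * defect_count) * (real r)\<^sup>2 / aut + 2 * real r * \<bar>zeta_F r VF EF\<bar> \<le> perturbation_constant r VF EF"
  using aut_ge_1 unfolding perturbation_constant_def Let_def aut_def
  by (simp_all add: add_divide_distrib)

lemma regular_case:
  assumes ns_0: "ns 0 \<ge> 2"
  shows "\<bar>(count n' - count ns) / aut - zeta_F r VF EF * (real (ns 0) - real (n' 0)) * real n ^ (card VF - 3)\<bar>
    \<le> perturbation_constant r VF EF * (real M)\<^sup>2 * (real n ^ (card VF - 2) / (real n)\<^sup>2)"
proof -
  let ?x = "\<lambda>i. real (n' i)" and ?y = "\<lambda>i. real (ns i)" and ?d = "card VF - 2"
  let ?a = "real (ns 0) - real (n' 0)" and ?Q = "real n ^ (card VF - 2) / (real n)\<^sup>2"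
  have X: "count n' = copy_poly r VF EF ?x"
    unfolding count_def by (rule real_card_embeddings_part[where ns = n', OF graph chi n'_0_ge_2])
  have Y: "count ns = copy_poly r VF EF ?y"
    unfolding count_def by (rule real_card_embeddings_part[where ns = ns, OF graph chi ns_0])
  have "\<bar>count n' - count ns + 2 * weight_gap * ?a * u ^ (?d - 1)\<bar> \<le> linear_error * (real r)\<^sup>2 * (real M)\<^sup>2 * ?Q"
  proof (cases "M = 0")
    case True
    then have same: "ns i = n' i" if "i < r" for i using deviation that by auto
    then have "copy_poly r VF EF ?x = copy_poly r VF EF ?y" by (intro copy_poly_cong) simp
    then show ?thesis using True r_pos X Y same by simp
  next
    case False
    have "(\<Sum>i<r. ?y i - ?x i) = 0"
      using sum_ns sum_n' by (simp add: sum_subtractf flip: of_nat_sum)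
    moreover have "real M \<le> real r * u" using M_le by (simp flip: n_eq)
    moreover have "1 \<le> real M" "1 \<le> u" using False u_gt_4 by auto
    ultimately have "\<bar>u * (count ns - count n') - 2 * weight_gap * ?a * u ^ ?d\<bar> * u
        \<le> linear_error * (real M)\<^sup>2 * u ^ ?d"
      using copy_poly_linearization[OF graph r_pos _ n'_near_u, of ?y M] deviation
      unfolding X Y weight_gap_def by (simp add: mult_ac)
    from rescaled_linearization_bound[OF _ _ _ _ this]
    show ?thesis using card_VF_ge_3 u_gt_4 r_pos unfolding n_eq by (simp add: algebra_simps)
  qed
  then have "\<bar>count n' - count ns + 2 * weight_gap * ?a * u ^ (?d - 1)\<bar> / aut
      \<le> linear_error * (real r)\<^sup>2 * (real M)\<^sup>2 * ?Q / aut"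
    using aut_ge_1 by (intro divide_right_mono) auto
  also have "\<dots> = linear_error * (real r)\<^sup>2 / aut * (real M)\<^sup>2 * ?Q" by simp
  also have "\<dots> \<le> perturbation_constant r VF EF * (real M)\<^sup>2 * ?Q"
    using perturbation_constant_ge(1) by (intro mult_right_mono) auto
  finally have "\<bar>count n' - count ns + 2 * weight_gap * ?a * u ^ (?d - 1)\<bar> / aut
      \<le> perturbation_constant r VF EF * (real M)\<^sup>2 * ?Q" .
  moreover have "(count n' - count ns) / aut - zeta_F r VF EF * ?a * real n ^ (card VF - 3)
      = (count n' - count ns + 2 * weight_gap * ?a * u ^ (?d - 1)) / aut"
    unfolding zeta_term by (simp add: diff_divide_distrib add_divide_distrib)
  ultimately show ?thesis using aut_ge_1 by simp
qed

text \<open>With fewer than two vertices in part 0 there is no copy, and the deviation of part 0 is of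
  order \<open>n\<close>.\<close>
lemma degenerate_case:
  assumes ns_0: "ns 0 < 2"
  shows "\<bar>(count n' - count ns) / aut - zeta_F r VF EF * (real (ns 0) - real (n' 0)) * real n ^ (card VF - 3)\<bar>
    \<le> perturbation_constant r VF EF * (real M)\<^sup>2 * (real n ^ (card VF - 2) / (real n)\<^sup>2)"
proof -
  let ?a = "real (ns 0) - real (n' 0)" and ?Q = "real n ^ (card VF - 2) / (real n)\<^sup>2"
  have "count ns = 0" unfolding count_def using embeddings_part_eq_empty[where ns = ns, OF graph chi ns_0] by simp
  moreover have "count n' \<le> 2 * defect_count * real n ^ (card VF - 2)"
    using card_embeddings_part_le[OF graph chi sum_n'] unfolding count_def
    by (metis (no_types, lifting) of_nat_le_iff of_nat_mult of_nat_numeral of_nat_power)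
  moreover have a: "\<bar>?a\<bar> \<le> real M" using deviation r_pos by simp
  moreover have "real n \<le> 2 * real r * real M"
  proof -
    have "?a \<le> 2 - u" using ns_0 n'_near_u r_pos by fastforce
    then have "u \<le> 2 * real M" using a u_gt_4 by linarith
    then show ?thesis unfolding n_eq using r_pos by simp
  qed
  moreover have "card VF - 3 = card VF - 2 - 1" by simp
  ultimately have "\<bar>(count n' - count ns) / aut - zeta_F r VF EF * ?a * real n ^ (card VF - 3)\<bar>
      \<le> (4 * (2 * defect_count) * (real r)\<^sup>2 / aut + 2 * real r * \<bar>zeta_F r VF EF\<bar>) * (real M)\<^sup>2 * ?Q"
    using degenerate_error_bound[of "card VF - 2" "count n'" "2 * defect_count" "real n" "real r" "real M"]
      card_VF_ge_3 n_large aut_ge_1 by (simp add: count_def)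
  also have "\<dots> \<le> perturbation_constant r VF EF * (real M)\<^sup>2 * ?Q"
    using perturbation_constant_ge(2) by (intro mult_right_mono) auto
  finally show ?thesis .
qed

theorem c_part_perturbation_bound:
  "\<bar>real (c_part r n' VF EF) - real (c_part r ns VF EF)
      - zeta_F r VF EF * real_of_int (int (ns 0) - int (n' 0)) * real n powi (int (card VF) - 3)\<bar>
    \<le> perturbation_constant r VF EF * (real M)\<^sup>2 * real n powi (int (card VF) - 4)"
proof -
  have "real n > 0" using n_large by simp
  note powers = powi_int_minus[OF this card_VF_ge_3]
  show ?thesis
    using regular_case degenerate_case unfolding powers real_c_part_eq diff_divide_distrib[symmetric]
    by (cases "ns 0 < 2") auto
qed

end

theorem lemma2:
  fixes r :: nat and VF :: "'f set" and EF :: "'f set set"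
  assumes "r \<ge> 2" and "is_graph VF EF" and "r_critical r VF EF"
  shows "\<exists>\<zeta> :: real. \<exists>C :: real. \<forall>\<delta> :: real. \<delta> > 0 \<longrightarrow> (\<exists>n0 :: nat. \<forall>n > n0.
     \<forall>n' ns :: nat \<Rightarrow> nat.
       (\<Sum>i<r. n' i) = n \<and> (\<forall>i<r. \<forall>j<r. \<bar>int (n' i) - int (n' j)\<bar> \<le> 1) \<and>
       c_part r n' VF EF = c_turan r n VF EF \<and>
       (\<Sum>i<r. ns i) = n \<and>
       real (Max {nat \<bar>int (ns i) - int (n' i)\<bar> | i. i < r}) < \<delta> * real n
       \<longrightarrow>
       \<bar>(real (c_turan r n VF EF) - real (c_part r ns VF EF))
          - \<zeta> * real_of_int (int (ns 0) - int (n' 0)) * real n powi (int (card VF) - 3)\<bar>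
        \<le> C * (real (Max {nat \<bar>int (ns i) - int (n' i)\<bar> | i. i < r}))^2
              * real n powi (int (card VF) - 4))"
proof -
  have chi: "chromatic_number VF EF = r + 1" using assms(3) unfolding r_critical_def by simp
  show ?thesis
  \<comment> \<open>The estimate holds for every \<open>n > 4r\<close>.\<close>
  proof (rule exI[of _ "zeta_F r VF EF"], rule exI[of _ "perturbation_constant r VF EF"],
      intro allI impI exI[of _ "4 * r"])
    fix \<delta> :: real and n :: nat and n' ns :: "nat \<Rightarrow> nat"
    let ?M = "Max {nat \<bar>int (ns i) - int (n' i)\<bar> | i. i < r}"
    assume "\<delta> > 0" and n: "4 * r < n" and hyps: "(\<Sum>i<r. n' i) = n \<and> (\<forall>i<r. \<forall>j<r. \<bar>int (n' i) - int (n' j)\<bar> \<le> 1) \<and>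
       c_part r n' VF EF = c_turan r n VF EF \<and> (\<Sum>i<r. ns i) = n \<and> real ?M < \<delta> * real n"
    then have sums: "(\<Sum>i<r. n' i) = n" "(\<Sum>i<r. ns i) = n"
      and balanced: "\<forall>i<r. \<forall>j<r. \<bar>int (n' i) - int (n' j)\<bar> \<le> 1" by blast+
    interpret turan_perturbation r VF EF n n' ns ?M
      using Max_deviation_bounds[of r ns n n'] assms(1,2) chi n sums balanced by unfold_locales simp_all
    show "\<bar>(real (c_turan r n VF EF) - real (c_part r ns VF EF))
          - zeta_F r VF EF * real_of_int (int (ns 0) - int (n' 0)) * real n powi (int (card VF) - 3)\<bar>
        \<le> perturbation_constant r VF EF * (real ?M)^2 * real n powi (int (card VF) - 4)"
      using c_part_perturbation_bound hyps by simp
  qed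
qed

end
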